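(* Let $\alpha$ be a QCA on $\mathrm{Mat}(\mathbb{Z}^D,p)$ with spread $\ell>1$ (more generally, any $\ell>1$ that bounds its spread), and $n\in\mathbb{Z}$. Then the boundary algebra $\mathcal B(n,\ell)=\alpha(\mathrm{Mat}(H(n),p))\cap\mathrm{Mat}(S(n,\ell),p)$, regarded as a subalgebra of a local operator algebra on $\mathbb{Z}^{D-1}$, is an invertible subalgebra. If the QCA has spread at most $\ell$, then this invertible subalgebra has spread at most $2\ell$.
   Context: For $p:\mathbb{Z}^D\to\mathbb{Z}_{>0}$ and finite $F$, $\mathrm{Mat}(F,p)=\bigotimes_{s\in F}M_{p(s)}(\mathbb{C})$ with embeddings by tensoring identities; $\mathrm{Mat}(\mathbb{Z}^D,p)$ is the union, and for arbitrary $S$, $\mathrm{Mat}(S,p)$ is the union of $\mathrm{Mat}(F,p)$ over finite $F\subseteq S$. $\mathrm{Supp}(x)$ is the smallest finite set $F$ with $x\in\mathrm{Mat}(F,p)$; $S^{+\ell}$ is the set of sites at $\ell_\infty$-distance at most $\ell$ from $S$. A QCA is a $*$-automorphism $\alpha$ of $\mathrm{Mat}(\mathbb{Z}^D,p)$ with some $\ell>0$ (spread) such that $\mathrm{Supp}(\alpha(x))\subseteq\mathrm{Supp}(x)^{+\ell}$ for all $x$. Put $H(n)=(\mathbb{Z}\cap(-\infty,n])\times\mathbb{Z}^{D-1}$ and $S(n,\ell)=(\mathbb{Z}\cap[n-\ell+1,n+\ell])\times\mathbb{Z}^{D-1}$. The algebra $\mathrm{Mat}(S(n,\ell),p)$ is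 identified with the local operator algebra $\mathrm{Mat}(\mathbb{Z}^{D-1},p')$ where the site $y\in\mathbb{Z}^{D-1}$ combines the sites $\{n-\ell+1,\dots,n+\ell\}\times\{y\}$, i.e. $p'(y)=\prod_{j=n-\ell+1}^{n+\ell}p(j,y)$. A unital $*$-subalgebra $\mathcal A$ of $\mathrm{Mat}(\mathbb{Z}^{D-1},p')$ is invertible with spread $m$ if every $x\in\mathrm{Mat}(\mathbb{Z}^{D-1},p')$ is a finite sum $x=\sum_ia_ib_i$ with $a_i\in\mathcal A$, $b_i$ in the commutant of $\mathcal A$ within $\mathrm{Mat}(\mathbb{Z}^{D-1},p')$, and $\mathrm{Supp}(a_i),\mathrm{Supp}(b_i)\subseteq\mathrm{Supp}(x)^{+m}$. *)

theory Defs
  imports Complex_Main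
begin

text \<open>Sites of Z^D are integer lists of length D; the first entry is the
distinguished coordinate used for half-spaces and strips.\<close>

type_synonym site = "int list"
type_synonym cfg = "site \<Rightarrow> nat"
text \<open>A (global, infinite) configuration assigns to each site s a basis index below p s.
An operator is a matrix kernel indexed by pairs of configurations.\<close>
type_synonym op = "cfg \<Rightarrow> cfg \<Rightarrow> complex"

definition sites :: "nat \<Rightarrow> site set" where
  "sites D = {s. length s = D}"

definition cfgs :: "nat \<Rightarrow> (site \<Rightarrow> nat) \<Rightarrow> cfg set" where
  "cfgs D p = {\<sigma>. (\<forall>s\<in>sites D. \<sigma> s < p s) \<and> (\<forall>s. s \<notin> sites D \<longrightarrow> \<sigma> s = 0)}"

text \<open>x is (the embedding of) an element of Mat(F,p) = tensor over s in F of M_{p(s)},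
i.e. x = x_F \<otimes> identity on the complement of F.\<close>
definition local_on :: "nat \<Rightarrow> (site \<Rightarrow> nat) \<Rightarrow> site set \<Rightarrow> op \<Rightarrow> bool" where
  "local_on D p F x \<longleftrightarrow> finite F \<and> F \<subseteq> sites D \<and>
     (\<forall>\<sigma> \<tau>. x \<sigma> \<tau> \<noteq> 0 \<longrightarrow> \<sigma> \<in> cfgs D p \<and> \<tau> \<in> cfgs D p \<and> (\<forall>s. s \<notin> F \<longrightarrow> \<sigma> s = \<tau> s)) \<and>
     (\<forall>\<sigma> \<tau> \<sigma>' \<tau>'. \<sigma> \<in> cfgs D p \<and> \<tau> \<in> cfgs D p \<and> \<sigma>' \<in> cfgs D p \<and> \<tau>' \<in> cfgs D p \<and>
        (\<forall>s. s \<notin> F \<longrightarrow> \<sigma> s = \<tau> s) \<and> (\<forall>s. s \<notin> F \<longrightarrow> \<sigma>' s = \<tau>' s) \<and>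
        (\<forall>s\<in>F. \<sigma> s = \<sigma>' s \<and> \<tau> s = \<tau>' s) \<longrightarrow> x \<sigma> \<tau> = x \<sigma>' \<tau>')"

definition Mat :: "nat \<Rightarrow> (site \<Rightarrow> nat) \<Rightarrow> site set \<Rightarrow> op set" where
  "Mat D p S = {x. \<exists>F. F \<subseteq> S \<and> finite F \<and> local_on D p F x}"

definition Supp :: "nat \<Rightarrow> (site \<Rightarrow> nat) \<Rightarrow> op \<Rightarrow> site set" where
  "Supp D p x = \<Inter> {F. local_on D p F x}"

definition op_mult :: "op \<Rightarrow> op \<Rightarrow> op" where
  "op_mult x y = (\<lambda>\<sigma> \<tau>. \<Sum>\<rho>\<in>{\<rho>. x \<sigma> \<rho> \<noteq> 0}. x \<sigma> \<rho> * y \<rho> \<tau>)"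

definition op_add :: "op \<Rightarrow> op \<Rightarrow> op" where
  "op_add x y = (\<lambda>\<sigma> \<tau>. x \<sigma> \<tau> + y \<sigma> \<tau>)"

definition op_scale :: "complex \<Rightarrow> op \<Rightarrow> op" where
  "op_scale c x = (\<lambda>\<sigma> \<tau>. c * x \<sigma> \<tau>)"

definition op_adj :: "op \<Rightarrow> op" where
  "op_adj x = (\<lambda>\<sigma> \<tau>. cnj (x \<tau> \<sigma>))"

definition op_one :: "nat \<Rightarrow> (site \<Rightarrow> nat) \<Rightarrow> op" where
  "op_one D p = (\<lambda>\<sigma> \<tau>. if \<sigma> = \<tau> \<and> \<sigma> \<in> cfgs D p then 1 else 0)"

definition op_zero :: op where
  "op_zero = (\<lambda>\<sigma> \<tau>. 0)"

definition op_sum_prods :: "(op \<times> op) list \<Rightarrow> op" where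
  "op_sum_prods ab = foldr (\<lambda>(a, b) acc. op_add (op_mult a b) acc) ab op_zero"

definition site_dist :: "site \<Rightarrow> site \<Rightarrow> int" where
  "site_dist s t = foldr max (map (\<lambda>(a, b). \<bar>a - b\<bar>) (zip s t)) 0"

definition nbhd :: "nat \<Rightarrow> int \<Rightarrow> site set \<Rightarrow> site set" where
  "nbhd D l S = {t \<in> sites D. \<exists>s\<in>S. site_dist s t \<le> l}"

definition is_QCA :: "nat \<Rightarrow> (site \<Rightarrow> nat) \<Rightarrow> int \<Rightarrow> (op \<Rightarrow> op) \<Rightarrow> bool" where
  "is_QCA D p l \<alpha> \<longleftrightarrow>
     l > 0 \<and>
     bij_betw \<alpha> (Mat D p (sites D)) (Mat D p (sites D)) \<and>
     (\<forall>x\<in>Mat D p (sites D). \<forall>y\<in>Mat D p (sites D).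
        \<alpha> (op_add x y) = op_add (\<alpha> x) (\<alpha> y) \<and> \<alpha> (op_mult x y) = op_mult (\<alpha> x) (\<alpha> y)) \<and>
     (\<forall>x\<in>Mat D p (sites D). \<forall>c. \<alpha> (op_scale c x) = op_scale c (\<alpha> x)) \<and>
     (\<forall>x\<in>Mat D p (sites D). \<alpha> (op_adj x) = op_adj (\<alpha> x)) \<and>
     \<alpha> (op_one D p) = op_one D p \<and>
     (\<forall>x\<in>Mat D p (sites D). Supp D p (\<alpha> x) \<subseteq> nbhd D l (Supp D p x))"

definition half_space :: "nat \<Rightarrow> int \<Rightarrow> site set" where
  "half_space D n = {s \<in> sites D. hd s \<le> n}"

definition strip :: "nat \<Rightarrow> int \<Rightarrow> int \<Rightarrow> site set" where
  "strip D n l = {s \<in> sites D. n - l + 1 \<le> hd s \<and> hd s \<le> n + l}"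

definition boundary_algebra :: "nat \<Rightarrow> (site \<Rightarrow> nat) \<Rightarrow> (op \<Rightarrow> op) \<Rightarrow> int \<Rightarrow> int \<Rightarrow> op set" where
  "boundary_algebra D p \<alpha> n l = \<alpha> ` Mat D p (half_space D n) \<inter> Mat D p (strip D n l)"

definition unital_star_subalg :: "nat \<Rightarrow> (site \<Rightarrow> nat) \<Rightarrow> op set \<Rightarrow> op set \<Rightarrow> bool" where
  "unital_star_subalg D p M A \<longleftrightarrow> A \<subseteq> M \<and> op_one D p \<in> A \<and>
     (\<forall>a\<in>A. \<forall>b\<in>A. op_add a b \<in> A \<and> op_mult a b \<in> A) \<and>
     (\<forall>a\<in>A. \<forall>c. op_scale c a \<in> A) \<and> (\<forall>a\<in>A. op_adj a \<in> A)"

text \<open>Invertible subalgebra with spread m of Mat(S(n,l),p), viewed as the local algebra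
Mat(Z^(D-1),p') on combined sites y (the column {n-l+1..n+l} x {y}).  An operator
supported in the strip has Z^(D-1)-support equal to the projection (tl) of its
Z^D-support, and neighbourhoods are taken in Z^(D-1).\<close>
definition invertible_strip_subalg ::
  "nat \<Rightarrow> (site \<Rightarrow> nat) \<Rightarrow> int \<Rightarrow> int \<Rightarrow> op set \<Rightarrow> int \<Rightarrow> bool" where
  "invertible_strip_subalg D p n l A m \<longleftrightarrow>
     unital_star_subalg D p (Mat D p (strip D n l)) A \<and>
     (\<forall>x\<in>Mat D p (strip D n l). \<exists>ab :: (op \<times> op) list.
        x = op_sum_prods ab \<and>
        (\<forall>(a, b)\<in>set ab.
           a \<in> A \<and>
           b \<in> Mat D p (strip D n l) \<and> (\<forall>a'\<in>A. op_mult a' b = op_mult b a') \<and>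
           tl ` Supp D p a \<subseteq> nbhd (D - 1) m (tl ` Supp D p x) \<and>
           tl ` Supp D p b \<subseteq> nbhd (D - 1) m (tl ` Supp D p x)))"

end

theory Submission
  imports Defs "HOL-Library.FuncSet"
begin

text \<open>
  Let \<open>x\<close> be supported on \<open>F\<close> inside the strip and put \<open>y = \<alpha>\<^sup>-\<^sup>1(x)\<close>. A matrix unit \<open>e\<close>
  at a site farther than \<open>\<ell>\<close> from \<open>F\<close> has \<open>\<alpha>(e)\<close> supported away from \<open>F\<close>, so \<open>\<alpha>(e)\<close>
  commutes with \<open>x\<close> and \<open>e\<close> commutes with \<open>y\<close>: thus \<open>y\<close> lives on \<open>F\<^sup>+\<^sup>\<ell>\<close>. Cutting
  \<open>F\<^sup>+\<^sup>\<ell>\<close> along the boundary of \<open>H(n)\<close> writes \<open>y = \<Sum> u\<^sub>i v\<^sub>i\<close> with \<open>u\<^sub>i\<close> left and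
  \<open>v\<^sub>i\<close> right of the cut, so \<open>x = \<Sum> \<alpha>(u\<^sub>i) \<alpha>(v\<^sub>i)\<close>, where \<open>\<alpha>(u\<^sub>i)\<close> lives on the sites
  with first coordinate at most \<open>n + \<ell>\<close>, \<open>\<alpha>(v\<^sub>i)\<close> on those with first coordinate at least
  \<open>n - \<ell> + 1\<close>, and both within \<open>F\<^sup>+\<^sup>2\<^sup>\<ell>\<close>.

  Now take the normalised partial trace over the finitely many sites of these supports lying to
  the left of the strip, and over those lying to the right of it. This fixes \<open>x\<close> and acts on one
  factor of each product only, giving \<open>x = \<Sum> a\<^sub>i b\<^sub>i\<close> with \<open>a\<^sub>i\<close> and \<open>b\<^sub>i\<close> in the strip.
  Since the partial trace over a site is built from matrix units at that site, and matrix units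
  far from the cut lie in the image of the corresponding half space, \<open>a\<^sub>i\<close> stays in
  \<open>\<alpha>(Mat(H(n)))\<close>, i.e. in the boundary algebra, and \<open>b\<^sub>i\<close> stays in the image of the
  complementary half space, so it commutes with the boundary algebra.
\<close>

context
  fixes D :: nat and p :: "site \<Rightarrow> nat"
begin

section \<open>Local operators\<close>

definition variants :: "site set \<Rightarrow> cfg \<Rightarrow> cfg set" where
  "variants F \<sigma> = {\<rho> \<in> cfgs D p. \<forall>t. t \<notin> F \<longrightarrow> \<rho> t = \<sigma> t}"

lemma finite_variants:
  assumes "finite F" "F \<subseteq> sites D"
  shows "finite (variants F \<sigma>)"
proof -
  have "inj_on (\<lambda>\<rho>. restrict \<rho> F) (variants F \<sigma>)"
  proof (rule inj_onI, rule ext)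
    fix a b t assume "a \<in> variants F \<sigma>" "b \<in> variants F \<sigma>" "restrict a F = restrict b F"
    then show "a t = b t"
      by (cases "t \<in> F") (auto simp: variants_def dest: fun_cong[where x = t])
  qed
  moreover have "(\<lambda>\<rho>. restrict \<rho> F) ` variants F \<sigma> \<subseteq> (\<Pi>\<^sub>E s\<in>F. {..<p s})"
    using assms(2) by (auto simp: variants_def cfgs_def)
  moreover have "finite (\<Pi>\<^sub>E s\<in>F. {..<p s})"
    using assms(1) by (intro finite_PiE) auto
  ultimately show ?thesis
    by (meson finite_imageD finite_subset)
qed

lemma local_onI:
  assumes "finite F" "F \<subseteq> sites D"
    and "\<And>\<sigma> \<tau>. x \<sigma> \<tau> \<noteq> 0 \<Longrightarrow> \<sigma> \<in> cfgs D p \<and> \<tau> \<in> cfgs D p \<and> (\<forall>t. t \<notin> F \<longrightarrow> \<sigma> t = \<tau> t)"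
    and "\<And>\<sigma> \<tau> \<sigma>' \<tau>'. \<sigma> \<in> cfgs D p \<Longrightarrow> \<tau> \<in> cfgs D p \<Longrightarrow> \<sigma>' \<in> cfgs D p \<Longrightarrow> \<tau>' \<in> cfgs D p \<Longrightarrow>
      \<forall>t. t \<notin> F \<longrightarrow> \<sigma> t = \<tau> t \<Longrightarrow> \<forall>t. t \<notin> F \<longrightarrow> \<sigma>' t = \<tau>' t \<Longrightarrow>
      \<forall>t\<in>F. \<sigma> t = \<sigma>' t \<and> \<tau> t = \<tau>' t \<Longrightarrow> x \<sigma> \<tau> = x \<sigma>' \<tau>'"
  shows "local_on D p F x"
  unfolding local_on_def using assms(1-3)
  by (intro conjI allI impI; (elim conjE)?; blast intro: assms(4))

lemma local_on_finite: "local_on D p F x \<Longrightarrow> finite F"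
  and local_on_subset_sites: "local_on D p F x \<Longrightarrow> F \<subseteq> sites D"
  unfolding local_on_def by blast+

lemma local_on_nonzeroD:
  assumes "local_on D p F x" "x \<sigma> \<tau> \<noteq> 0"
  shows "\<sigma> \<in> cfgs D p \<and> \<tau> \<in> cfgs D p \<and> (\<forall>t. t \<notin> F \<longrightarrow> \<sigma> t = \<tau> t)"
  using assms unfolding local_on_def by blast

lemma local_on_kernel_eq:
  assumes "local_on D p F x" "\<sigma> \<in> cfgs D p" "\<tau> \<in> cfgs D p" "\<sigma>' \<in> cfgs D p" "\<tau>' \<in> cfgs D p"
    and "\<forall>t. t \<notin> F \<longrightarrow> \<sigma> t = \<tau> t" "\<forall>t. t \<notin> F \<longrightarrow> \<sigma>' t = \<tau>' t"
    and "\<forall>t\<in>F. \<sigma> t = \<sigma>' t \<and> \<tau> t = \<tau>' t"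
  shows "x \<sigma> \<tau> = x \<sigma>' \<tau>'"
  using assms unfolding local_on_def by blast

lemma nonzero_subset_variants:
  assumes "local_on D p F x"
  shows "{\<rho>. x \<sigma> \<rho> \<noteq> 0} \<subseteq> variants F \<sigma>"
  using local_on_nonzeroD[OF assms] by (fastforce simp: variants_def)

lemma local_on_finite_variants: "local_on D p F x \<Longrightarrow> finite (variants F \<sigma>)"
  by (rule finite_variants[OF local_on_finite local_on_subset_sites])

lemma op_mult_eq_sum:
  assumes "finite A" "{\<rho>. x \<sigma> \<rho> \<noteq> 0} \<subseteq> A"
  shows "op_mult x y \<sigma> \<tau> = (\<Sum>\<rho>\<in>A. x \<sigma> \<rho> * y \<rho> \<tau>)"
  unfolding op_mult_def by (rule sum.mono_neutral_left[OF assms]) simp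

lemma op_mult_eq_sum_variants:
  assumes "local_on D p F x"
  shows "op_mult x y \<sigma> \<tau> = (\<Sum>\<rho>\<in>variants F \<sigma>. x \<sigma> \<rho> * y \<rho> \<tau>)"
  by (rule op_mult_eq_sum[OF local_on_finite_variants[OF assms] nonzero_subset_variants[OF assms]])

lemma cfgs_if: "\<sigma> \<in> cfgs D p \<Longrightarrow> \<tau> \<in> cfgs D p \<Longrightarrow> (\<lambda>t. if P t then \<sigma> t else \<tau> t) \<in> cfgs D p"
  by (auto simp: cfgs_def)

lemma cfgs_fun_upd: "\<sigma> \<in> cfgs D p \<Longrightarrow> s \<in> sites D \<Longrightarrow> j < p s \<Longrightarrow> \<sigma>(s := j) \<in> cfgs D p"
  by (auto simp: cfgs_def)

lemma local_on_mono:
  assumes x: "local_on D p F x" and FG: "F \<subseteq> G" "finite G" "G \<subseteq> sites D"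
  shows "local_on D p G x"
proof (rule local_onI[OF FG(2,3)])
  fix \<sigma> \<tau> assume "x \<sigma> \<tau> \<noteq> 0"
  then show "\<sigma> \<in> cfgs D p \<and> \<tau> \<in> cfgs D p \<and> (\<forall>t. t \<notin> G \<longrightarrow> \<sigma> t = \<tau> t)"
    using local_on_nonzeroD[OF x] FG(1) by blast
next
  fix \<sigma> \<tau> \<sigma>' \<tau>' assume c: "\<sigma> \<in> cfgs D p" "\<tau> \<in> cfgs D p" "\<sigma>' \<in> cfgs D p" "\<tau>' \<in> cfgs D p"
    and off: "\<forall>t. t \<notin> G \<longrightarrow> \<sigma> t = \<tau> t" "\<forall>t. t \<notin> G \<longrightarrow> \<sigma>' t = \<tau>' t"
    and on: "\<forall>t\<in>G. \<sigma> t = \<sigma>' t \<and> \<tau> t = \<tau>' t"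
  show "x \<sigma> \<tau> = x \<sigma>' \<tau>'"
  proof (cases "\<forall>t. t \<notin> F \<longrightarrow> \<sigma> t = \<tau> t")
    case True
    then have "\<forall>t. t \<notin> F \<longrightarrow> \<sigma>' t = \<tau>' t"
      using off(2) on by metis
    then show ?thesis
      using local_on_kernel_eq[OF x c True] on FG(1) by blast
  next
    case False
    then obtain t where "t \<notin> F" "\<sigma> t \<noteq> \<tau> t" by blast
    moreover from this have "\<sigma>' t \<noteq> \<tau>' t" using off(1) on by metis
    ultimately show ?thesis
      using local_on_nonzeroD[OF x, of \<sigma> \<tau>] local_on_nonzeroD[OF x, of \<sigma>' \<tau>'] by metis
  qed
qed

lemma local_on_Int:
  assumes "local_on D p F x" "local_on D p G x"
  shows "local_on D p (F \<inter> G) x"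
proof (rule local_onI)
  show "finite (F \<inter> G)" "F \<inter> G \<subseteq> sites D" using assms local_on_finite local_on_subset_sites
    by blast+
  fix \<sigma> \<tau> assume "x \<sigma> \<tau> \<noteq> 0" then show "\<sigma> \<in> cfgs D p \<and> \<tau> \<in> cfgs D p \<and> (\<forall>t. t\<notin>F \<inter> G \<longrightarrow> \<sigma> t = \<tau> t)"
    using local_on_nonzeroD[OF assms(1)] local_on_nonzeroD[OF assms(2)] by blast
next
  fix \<sigma> \<tau> \<sigma>' \<tau>' assume c: "\<sigma> \<in> cfgs D p" "\<tau> \<in> cfgs D p" "\<sigma>' \<in> cfgs D p" "\<tau>' \<in> cfgs D p"
   and a1: "\<forall>t. t \<notin> F \<inter> G \<longrightarrow> \<sigma> t = \<tau> t" and a2: "\<forall>t. t \<notin> F \<inter> G \<longrightarrow> \<sigma>' t = \<tau>' t"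
   and a3: "\<forall>t\<in>F \<inter> G. \<sigma> t = \<sigma>' t \<and> \<tau> t = \<tau>' t"
  define \<sigma>1 where "\<sigma>1 = (\<lambda>t. if t \<in> G then \<sigma> t else \<sigma>' t)"
  define \<tau>1 where "\<tau>1 = (\<lambda>t. if t \<in> G then \<tau> t else \<tau>' t)"
  have c1: "\<sigma>1 \<in> cfgs D p" "\<tau>1 \<in> cfgs D p" unfolding \<sigma>1_def \<tau>1_def using c by (auto intro: cfgs_if)
  have e1: "\<forall>t. t \<notin> G \<longrightarrow> \<sigma> t = \<tau> t" using a1 by blast
  have e2: "\<forall>t. t \<notin> G \<longrightarrow> \<sigma>1 t = \<tau>1 t" using a2 by (simp add: \<sigma>1_def \<tau>1_def)
  have e3: "\<forall>t\<in>G. \<sigma> t = \<sigma>1 t \<and> \<tau> t = \<tau>1 t" by (simp add: \<sigma>1_def \<tau>1_def)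
  have "x \<sigma> \<tau> = x \<sigma>1 \<tau>1" by (rule local_on_kernel_eq[OF assms(2) c(1,2) c1 e1 e2 e3])
  also have "\<dots> = x \<sigma>' \<tau>'"
  proof (rule local_on_kernel_eq[OF assms(1) c1 c(3,4)])
    show "\<forall>t. t \<notin> F \<longrightarrow> \<sigma>1 t = \<tau>1 t" using a1 a2 by (simp add: \<sigma>1_def \<tau>1_def)
    show "\<forall>t. t \<notin> F \<longrightarrow> \<sigma>' t = \<tau>' t" using a2 by blast
    show "\<forall>t\<in>F. \<sigma>1 t = \<sigma>' t \<and> \<tau>1 t = \<tau>' t" using a3 by (simp add: \<sigma>1_def \<tau>1_def)
  qed
  finally show "x \<sigma> \<tau> = x \<sigma>' \<tau>'" .
qed


lemma Supp_subset: "local_on D p F x \<Longrightarrow> Supp D p x \<subseteq> F"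
  unfolding Supp_def by (rule Inter_lower) simp

lemma local_on_Supp:
  assumes x: "local_on D p F x"
  shows "local_on D p (Supp D p x) x"
proof -
  let ?A = "{G. local_on D p G x \<and> G \<subseteq> F}"
  have fin: "finite ?A"
    by (rule finite_subset[of _ "Pow F"]) (use local_on_finite[OF x] in auto)
  have ne: "?A \<noteq> {}" using x by auto
  obtain m where m: "m \<in> ?A" and mmin: "\<forall>b\<in>?A. b \<le> m \<longrightarrow> m = b"
    using finite_has_minimal[OF fin ne] by blast
  have "m \<subseteq> G" if "local_on D p G x" for G
  proof -
    have "local_on D p (m \<inter> G) x" using local_on_Int m that by blast
    then have "m \<inter> G \<in> ?A" using m by auto
    then have "m = m \<inter> G" using mmin by blast
    then show ?thesis by blast
  qed
  then have "m \<subseteq> Supp D p x" unfolding Supp_def by blast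
  moreover have "Supp D p x \<subseteq> m" using Supp_subset m by blast
  ultimately show ?thesis using m by simp
qed

lemma local_on_op_add:
  assumes "local_on D p F x" "local_on D p F y"
  shows "local_on D p F (op_add x y)"
proof (rule local_onI)
  show "finite F" "F \<subseteq> sites D"
    using local_on_finite[OF assms(1)] local_on_subset_sites[OF assms(1)] .
  fix \<sigma> \<tau> assume "op_add x y \<sigma> \<tau> \<noteq> 0"
  then have "x \<sigma> \<tau> \<noteq> 0 \<or> y \<sigma> \<tau> \<noteq> 0" unfolding op_add_def by auto
  then show "\<sigma> \<in> cfgs D p \<and> \<tau> \<in> cfgs D p \<and> (\<forall>t. t\<notin>F \<longrightarrow> \<sigma> t = \<tau> t)"
    using local_on_nonzeroD[OF assms(1), of \<sigma> \<tau>] local_on_nonzeroD[OF assms(2), of \<sigma> \<tau>] by blast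
next
  fix \<sigma> \<tau> \<sigma>' \<tau>' assume c: "\<sigma> \<in> cfgs D p" "\<tau> \<in> cfgs D p" "\<sigma>' \<in> cfgs D p" "\<tau>' \<in> cfgs D p"
   and a: "\<forall>t. t \<notin> F \<longrightarrow> \<sigma> t = \<tau> t" "\<forall>t. t \<notin> F \<longrightarrow> \<sigma>' t = \<tau>' t"
   "\<forall>t\<in>F. \<sigma> t = \<sigma>' t \<and> \<tau> t = \<tau>' t"
  show "op_add x y \<sigma> \<tau> = op_add x y \<sigma>' \<tau>'" unfolding op_add_def
    using local_on_kernel_eq[OF assms(1) c a] local_on_kernel_eq[OF assms(2) c a] by simp
qed

lemma local_on_op_scale:
  assumes "local_on D p F x"
  shows "local_on D p F (op_scale c x)"
proof (rule local_onI)
  show "finite F" "F \<subseteq> sites D"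
    using local_on_finite[OF assms(1)] local_on_subset_sites[OF assms(1)] .
  fix \<sigma> \<tau> assume "op_scale c x \<sigma> \<tau> \<noteq> 0"
  then have "x \<sigma> \<tau> \<noteq> 0" unfolding op_scale_def by auto
  then show "\<sigma> \<in> cfgs D p \<and> \<tau> \<in> cfgs D p \<and> (\<forall>t. t\<notin>F \<longrightarrow> \<sigma> t = \<tau> t)"
    using local_on_nonzeroD[OF assms(1), of \<sigma> \<tau>] by blast
next
  fix \<sigma> \<tau> \<sigma>' \<tau>' assume c: "\<sigma> \<in> cfgs D p" "\<tau> \<in> cfgs D p" "\<sigma>' \<in> cfgs D p" "\<tau>' \<in> cfgs D p"
   and a: "\<forall>t. t \<notin> F \<longrightarrow> \<sigma> t = \<tau> t" "\<forall>t. t \<notin> F \<longrightarrow> \<sigma>' t = \<tau>' t"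
   "\<forall>t\<in>F. \<sigma> t = \<sigma>' t \<and> \<tau> t = \<tau>' t"
  show "op_scale c x \<sigma> \<tau> = op_scale c x \<sigma>' \<tau>'" unfolding op_scale_def
    using local_on_kernel_eq[OF assms(1) c a] by simp
qed

lemma local_on_op_adj:
  assumes "local_on D p F x"
  shows "local_on D p F (op_adj x)"
proof (rule local_onI)
  show "finite F" "F \<subseteq> sites D"
    using local_on_finite[OF assms(1)] local_on_subset_sites[OF assms(1)] .
  fix \<sigma> \<tau> assume "op_adj x \<sigma> \<tau> \<noteq> 0"
  then have "x \<tau> \<sigma> \<noteq> 0" unfolding op_adj_def by auto
  from local_on_nonzeroD[OF assms(1) this]
  show "\<sigma> \<in> cfgs D p \<and> \<tau> \<in> cfgs D p \<and> (\<forall>t. t\<notin>F \<longrightarrow> \<sigma> t = \<tau> t)" by simp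
next
  fix \<sigma> \<tau> \<sigma>' \<tau>' assume c: "\<sigma> \<in> cfgs D p" "\<tau> \<in> cfgs D p" "\<sigma>' \<in> cfgs D p" "\<tau>' \<in> cfgs D p"
   and a: "\<forall>t. t \<notin> F \<longrightarrow> \<sigma> t = \<tau> t" "\<forall>t. t \<notin> F \<longrightarrow> \<sigma>' t = \<tau>' t"
   "\<forall>t\<in>F. \<sigma> t = \<sigma>' t \<and> \<tau> t = \<tau>' t"
  have a1: "\<forall>t. t \<notin> F \<longrightarrow> \<tau> t = \<sigma> t" "\<forall>t. t \<notin> F \<longrightarrow> \<tau>' t = \<sigma>' t"
    "\<forall>t\<in>F. \<tau> t = \<tau>' t \<and> \<sigma> t = \<sigma>' t" using a by simp_all
  show "op_adj x \<sigma> \<tau> = op_adj x \<sigma>' \<tau>'" unfolding op_adj_def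
    using local_on_kernel_eq[OF assms(1) c(2,1,4,3) a1] by simp
qed

lemma local_on_op_zero:
  assumes "finite F" "F \<subseteq> sites D"
  shows "local_on D p F op_zero"
  by (rule local_onI[OF assms]) (simp_all add: op_zero_def)

lemma local_on_op_one: "local_on D p {} (op_one D p)"
proof (rule local_onI)
  fix \<sigma> \<tau> assume "op_one D p \<sigma> \<tau> \<noteq> 0"
  then show "\<sigma> \<in> cfgs D p \<and> \<tau> \<in> cfgs D p \<and> (\<forall>t. t\<notin>{} \<longrightarrow> \<sigma> t = \<tau> t)"
    unfolding op_one_def by (simp split: if_splits)
next
  fix \<sigma> \<tau> \<sigma>' \<tau>' assume c: "\<sigma> \<in> cfgs D p" "\<tau> \<in> cfgs D p" "\<sigma>' \<in> cfgs D p" "\<tau>' \<in> cfgs D p"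
   and a: "\<forall>t. t \<notin> {} \<longrightarrow> \<sigma> t = \<tau> t" "\<forall>t. t \<notin> {} \<longrightarrow> \<sigma>' t = \<tau>' t"
  have "\<sigma> = \<tau>" "\<sigma>' = \<tau>'" using a by auto
  then show "op_one D p \<sigma> \<tau> = op_one D p \<sigma>' \<tau>'" unfolding op_one_def using c by simp
qed simp_all

lemma sum_variants_reindex:
  assumes "\<sigma> \<in> cfgs D p" "\<sigma>' \<in> cfgs D p"
  shows "(\<Sum>\<rho>\<in>variants H \<sigma>. g \<rho>) = (\<Sum>\<rho>\<in>variants H \<sigma>'. g (\<lambda>t. if t \<in> H then \<rho> t else \<sigma> t))"
proof (rule sum.reindex_bij_witness[where i = "\<lambda>\<rho> t. if t \<in> H then \<rho> t else \<sigma> t"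
      and j = "\<lambda>\<rho> t. if t \<in> H then \<rho> t else \<sigma>' t"])
  fix \<rho> assume \<rho>: "\<rho> \<in> variants H \<sigma>"
  then show "(\<lambda>t. if t \<in> H then (if t \<in> H then \<rho> t else \<sigma>' t) else \<sigma> t) = \<rho>"
    by (auto simp: variants_def fun_eq_iff)
  then show "g (\<lambda>t. if t \<in> H then (if t \<in> H then \<rho> t else \<sigma>' t) else \<sigma> t) = g \<rho>"
    by simp
  show "(\<lambda>t. if t \<in> H then \<rho> t else \<sigma>' t) \<in> variants H \<sigma>'"
    using \<rho> assms(2) by (auto simp: variants_def intro: cfgs_if)
next
  fix \<rho> assume "\<rho> \<in> variants H \<sigma>'"
  then show "(\<lambda>t. if t \<in> H then (if t \<in> H then \<rho> t else \<sigma> t) else \<sigma>' t) = \<rho>"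
    and "(\<lambda>t. if t \<in> H then \<rho> t else \<sigma> t) \<in> variants H \<sigma>"
    using assms(1) by (auto simp: variants_def fun_eq_iff intro: cfgs_if)
qed

lemma local_on_op_mult:
  assumes x: "local_on D p F x"
    and y: "local_on D p G y"
  shows "local_on D p (F \<union> G) (op_mult x y)"
proof -
  let ?H = "F \<union> G"
  have fin: "finite ?H" "?H \<subseteq> sites D"
    using x y local_on_finite local_on_subset_sites by blast+
  have xH: "local_on D p ?H x" and yH: "local_on D p ?H y"
    using local_on_mono[OF x _ fin] local_on_mono[OF y _ fin] by blast+
  show ?thesis
  proof (rule local_onI[OF fin])
    fix \<sigma> \<tau> assume "op_mult x y \<sigma> \<tau> \<noteq> 0"
    then have "(\<Sum>\<rho>\<in>variants F \<sigma>. x \<sigma> \<rho> * y \<rho> \<tau>) \<noteq> 0" using op_mult_eq_sum_variants[OF x] by simp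
    then obtain \<rho> where "x \<sigma> \<rho> * y \<rho> \<tau> \<noteq> 0" by (rule sum.not_neutral_contains_not_neutral)
    then have "x \<sigma> \<rho> \<noteq> 0" "y \<rho> \<tau> \<noteq> 0" by auto
    from local_on_nonzeroD[OF x this(1)] local_on_nonzeroD[OF y this(2)]
    show "\<sigma> \<in> cfgs D p \<and> \<tau> \<in> cfgs D p \<and> (\<forall>t. t \<notin> ?H \<longrightarrow> \<sigma> t = \<tau> t)" by auto
  next
    fix \<sigma> \<tau> \<sigma>' \<tau>' assume c: "\<sigma> \<in> cfgs D p" "\<tau> \<in> cfgs D p" "\<sigma>' \<in> cfgs D p" "\<tau>' \<in> cfgs D p"
      and off: "\<forall>t. t \<notin> ?H \<longrightarrow> \<sigma> t = \<tau> t" "\<forall>t. t \<notin> ?H \<longrightarrow> \<sigma>' t = \<tau>' t"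
      and on: "\<forall>t\<in>?H. \<sigma> t = \<sigma>' t \<and> \<tau> t = \<tau>' t"
    have "x \<sigma> (\<lambda>t. if t \<in> ?H then \<rho> t else \<sigma> t) * y (\<lambda>t. if t \<in> ?H then \<rho> t else \<sigma> t) \<tau> =
      x \<sigma>' \<rho> * y \<rho> \<tau>'" if "\<rho> \<in> variants ?H \<sigma>'" for \<rho>
    proof -
      have \<rho>: "\<rho> \<in> cfgs D p" "\<forall>t. t \<notin> ?H \<longrightarrow> \<rho> t = \<sigma>' t"
        using that by (auto simp: variants_def)
      let ?\<rho> = "\<lambda>t. if t \<in> ?H then \<rho> t else \<sigma> t"
      have \<rho>': "?\<rho> \<in> cfgs D p" using \<rho>(1) c(1) by (rule cfgs_if)
      have "x \<sigma> ?\<rho> = x \<sigma>' \<rho>"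
        by (rule local_on_kernel_eq[OF xH c(1) \<rho>' c(3) \<rho>(1)]) (use \<rho>(2) on in auto)
      moreover have "y ?\<rho> \<tau> = y \<rho> \<tau>'"
        by (rule local_on_kernel_eq[OF yH \<rho>' c(2) \<rho>(1) c(4)]) (use \<rho>(2) off on in auto)
      ultimately show ?thesis by simp
    qed
    then have "(\<Sum>\<rho>\<in>variants ?H \<sigma>. x \<sigma> \<rho> * y \<rho> \<tau>) = (\<Sum>\<rho>\<in>variants ?H \<sigma>'. x \<sigma>' \<rho> * y \<rho> \<tau>')"
      unfolding sum_variants_reindex[OF c(1,3)] by (rule sum.cong[OF refl])
    then show "op_mult x y \<sigma> \<tau> = op_mult x y \<sigma>' \<tau>'" using op_mult_eq_sum_variants[OF xH] by simp
  qed
qed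


definition op_sum :: "'i list \<Rightarrow> ('i \<Rightarrow> op) \<Rightarrow> op" where
  "op_sum xs f = (\<lambda>\<sigma> \<tau>. sum_list (map (\<lambda>i. f i \<sigma> \<tau>) xs))"

lemma op_sum_Nil: "op_sum [] f = op_zero"
  by (simp add: op_sum_def op_zero_def)

lemma op_sum_Cons: "op_sum (i # xs) f = op_add (f i) (op_sum xs f)"
  by (simp add: op_sum_def op_add_def)

lemma local_on_op_sum:
  assumes "finite F" "F \<subseteq> sites D"
  shows "(\<forall>i\<in>set xs. local_on D p F (f i)) \<Longrightarrow> local_on D p F (op_sum xs f)"
proof (induction xs)
  case Nil then show ?case using local_on_op_zero[OF assms] by (simp add: op_sum_Nil)
next
  case (Cons a xs) then show ?case by (simp add: op_sum_Cons local_on_op_add)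
qed

lemma op_sum_cong:
  assumes "\<And>i. i \<in> set xs \<Longrightarrow> f i = g i"
  shows "op_sum xs f = op_sum xs g"
proof (intro ext)
  fix \<sigma> \<tau>
  have "map (\<lambda>i. f i \<sigma> \<tau>) xs = map (\<lambda>i. g i \<sigma> \<tau>) xs" by (rule map_cong) (simp_all add: assms)
  then show "op_sum xs f \<sigma> \<tau> = op_sum xs g \<sigma> \<tau>" unfolding op_sum_def by (rule arg_cong)
qed

lemma op_sum_case_prod_cong:
  "(\<And>a b. (a, b) \<in> set xs \<Longrightarrow> f a b = g a b) \<Longrightarrow> op_sum xs (\<lambda>(a, b). f a b) = op_sum xs (\<lambda>(a, b). g a b)"
  by (rule op_sum_cong) (auto split: prod.split)

lemma op_sum_map: "op_sum (map h xs) f = op_sum xs (\<lambda>i. f (h i))"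
  unfolding op_sum_def by (simp add: comp_def)

lemma op_sum_concat: "op_sum (concat (map g ys)) f = op_sum ys (\<lambda>j. op_sum (g j) f)"
  unfolding op_sum_def by (intro ext) (induction ys, simp_all)

lemma sum_list_swap: "sum_list (map (\<lambda>i. sum_list (map (\<lambda>j. h i j) ys)) xs) =
   sum_list (map (\<lambda>j. sum_list (map (\<lambda>i. h i j) xs)) ys)" for h :: "_ \<Rightarrow> _ \<Rightarrow> 'a::comm_monoid_add"
  by (induction xs) (simp_all add: sum_list_addf)

lemma op_sum_swap: "op_sum xs (\<lambda>i. op_sum ys (\<lambda>j. f i j)) = op_sum ys (\<lambda>j. op_sum xs (\<lambda>i. f i j))"
  unfolding op_sum_def by (intro ext) (rule sum_list_swap)

lemma op_sum_prods_eq_op_sum: "op_sum_prods ab = op_sum ab (\<lambda>(a, b). op_mult a b)"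
proof (induction ab)
  case Nil then show ?case by (simp add: op_sum_prods_def op_sum_Nil)
next
  case (Cons a ab) then show ?case
    by (cases a) (simp add: op_sum_prods_def op_sum_Cons)
qed

lemma sum_sum_list_right: "(\<Sum>\<rho>\<in>A. c \<rho> * sum_list (map (\<lambda>i. g i \<rho>) xs)) =
    sum_list (map (\<lambda>i. \<Sum>\<rho>\<in>A. c \<rho> * g i \<rho>) xs)" for c :: "_ \<Rightarrow> 'a::semiring_0"
  by (induction xs) (simp_all add: distrib_left sum.distrib)

lemma sum_sum_list_left: "(\<Sum>\<rho>\<in>A. sum_list (map (\<lambda>i. g i \<rho>) xs) * c \<rho>) =
    sum_list (map (\<lambda>i. \<Sum>\<rho>\<in>A. g i \<rho> * c \<rho>) xs)" for c :: "_ \<Rightarrow> 'a::semiring_0"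
  by (induction xs) (simp_all add: distrib_right sum.distrib)

lemma op_mult_op_sum_right:
  assumes "local_on D p F x"
  shows "op_mult x (op_sum xs f) = op_sum xs (\<lambda>i. op_mult x (f i))"
proof (intro ext)
  fix \<sigma> \<tau>
  have "op_mult x (op_sum xs f) \<sigma> \<tau> = (\<Sum>\<rho>\<in>variants F \<sigma>. x \<sigma> \<rho> * sum_list (map (\<lambda>i. f i \<rho> \<tau>) xs))"
    by (simp add: op_mult_eq_sum_variants[OF assms] op_sum_def)
  also have "\<dots> = sum_list (map (\<lambda>i. \<Sum>\<rho>\<in>variants F \<sigma>. x \<sigma> \<rho> * f i \<rho> \<tau>) xs)"
    by (rule sum_sum_list_right)
  also have "\<dots> = op_sum xs (\<lambda>i. op_mult x (f i)) \<sigma> \<tau>"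
    by (simp add: op_mult_eq_sum_variants[OF assms] op_sum_def)
  finally show "op_mult x (op_sum xs f) \<sigma> \<tau> = op_sum xs (\<lambda>i. op_mult x (f i)) \<sigma> \<tau>" .
qed

lemma op_mult_op_sum_left:
  assumes "finite F" "F \<subseteq> sites D" "\<forall>i\<in>set xs. local_on D p F (f i)"
  shows "op_mult (op_sum xs f) z = op_sum xs (\<lambda>i. op_mult (f i) z)"
proof (intro ext)
  fix \<sigma> \<tau>
  have L: "local_on D p F (op_sum xs f)" by (rule local_on_op_sum[OF assms(1,2) assms(3)])
  have "op_mult (op_sum xs f) z \<sigma> \<tau> = (\<Sum>\<rho>\<in>variants F \<sigma>. sum_list (map (\<lambda>i. f i \<sigma> \<rho>) xs) * z \<rho> \<tau>)"
    unfolding op_mult_eq_sum_variants[OF L] by (simp add: op_sum_def)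
  also have "\<dots> = sum_list (map (\<lambda>i. \<Sum>\<rho>\<in>variants F \<sigma>. f i \<sigma> \<rho> * z \<rho> \<tau>) xs)"
    by (rule sum_sum_list_left)
  also have "\<dots> = sum_list (map (\<lambda>i. op_mult (f i) z \<sigma> \<tau>) xs)"
  proof (rule arg_cong[where f=sum_list], rule map_cong[OF refl])
    fix i assume "i \<in> set xs"
    then show "(\<Sum>\<rho>\<in>variants F \<sigma>. f i \<sigma> \<rho> * z \<rho> \<tau>) = op_mult (f i) z \<sigma> \<tau>"
      using op_mult_eq_sum_variants assms(3) by metis
  qed
  also have "\<dots> = op_sum xs (\<lambda>i. op_mult (f i) z) \<sigma> \<tau>" by (simp add: op_sum_def)
  finally show "op_mult (op_sum xs f) z \<sigma> \<tau> = op_sum xs (\<lambda>i. op_mult (f i) z) \<sigma> \<tau>" .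
qed

lemma op_mult_op_scale_left:
  assumes "local_on D p F x"
  shows "op_mult (op_scale c x) y = op_scale c (op_mult x y)"
  unfolding op_mult_eq_sum_variants[OF local_on_op_scale[OF assms]] op_mult_eq_sum_variants[OF assms]
  by (intro ext) (simp add: op_scale_def sum_distrib_left mult.assoc)

lemma op_mult_op_scale_right:
  assumes "local_on D p F x"
  shows "op_mult x (op_scale c y) = op_scale c (op_mult x y)"
  unfolding op_mult_eq_sum_variants[OF assms]
  by (intro ext) (simp add: op_scale_def sum_distrib_left mult.left_commute)

lemma op_mult_assoc:
  assumes x: "local_on D p F x"
    and y: "local_on D p G y"
    and z: "local_on D p H z"
  shows "op_mult (op_mult x y) z = op_mult x (op_mult y z)"
proof (intro ext)
  fix \<sigma> \<tau>
  let ?A = "variants (F \<union> G) \<sigma>" and ?B = "variants F \<sigma>"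
  have xy: "local_on D p (F \<union> G) (op_mult x y)" by (rule local_on_op_mult[OF x y])
  have finA: "finite ?A" by (rule local_on_finite_variants[OF xy])
  have inner: "op_mult y z \<rho>' \<tau> = (\<Sum>\<rho>\<in>?A. y \<rho>' \<rho> * z \<rho> \<tau>)" if r: "\<rho>' \<in> ?B" for \<rho>'
  proof (rule op_mult_eq_sum[OF finA])
    show "{\<rho>. y \<rho>' \<rho> \<noteq> 0} \<subseteq> ?A"
    proof
      fix \<rho> assume "\<rho> \<in> {\<rho>. y \<rho>' \<rho> \<noteq> 0}"
      then have "y \<rho>' \<rho> \<noteq> 0" by simp
      from local_on_nonzeroD[OF y this] have "\<rho> \<in> cfgs D p" "\<forall>t. t \<notin> G \<longrightarrow> \<rho>' t = \<rho> t" by blast+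
      moreover have "\<forall>t. t \<notin> F \<longrightarrow> \<rho>' t = \<sigma> t" using r unfolding variants_def by blast
      ultimately show "\<rho> \<in> ?A" unfolding variants_def by auto
    qed
  qed
  have "op_mult (op_mult x y) z \<sigma> \<tau> = (\<Sum>\<rho>\<in>?A. (\<Sum>\<rho>'\<in>?B. x \<sigma> \<rho>' * y \<rho>' \<rho>) * z \<rho> \<tau>)"
    by (simp add: op_mult_eq_sum_variants[OF xy] op_mult_eq_sum_variants[OF x])
  also have "\<dots> = (\<Sum>\<rho>\<in>?A. \<Sum>\<rho>'\<in>?B. x \<sigma> \<rho>' * (y \<rho>' \<rho> * z \<rho> \<tau>))"
    by (simp add: sum_distrib_right mult.assoc)
  also have "\<dots> = (\<Sum>\<rho>'\<in>?B. \<Sum>\<rho>\<in>?A. x \<sigma> \<rho>' * (y \<rho>' \<rho> * z \<rho> \<tau>))"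
    by (rule sum.swap)
  also have "\<dots> = (\<Sum>\<rho>'\<in>?B. x \<sigma> \<rho>' * (\<Sum>\<rho>\<in>?A. y \<rho>' \<rho> * z \<rho> \<tau>))"
    by (simp add: sum_distrib_left)
  also have "\<dots> = (\<Sum>\<rho>'\<in>?B. x \<sigma> \<rho>' * op_mult y z \<rho>' \<tau>)"
    by (rule sum.cong[OF refl]) (simp add: inner)
  also have "\<dots> = op_mult x (op_mult y z) \<sigma> \<tau>" by (simp add: op_mult_eq_sum_variants[OF x])
  finally show "op_mult (op_mult x y) z \<sigma> \<tau> = op_mult x (op_mult y z) \<sigma> \<tau>" .
qed

lemma op_mult_one_right:
  assumes "local_on D p F y"
  shows "op_mult y (op_one D p) = y"
proof (intro ext)
  fix \<sigma> \<tau>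
  have "op_mult y (op_one D p) \<sigma> \<tau> = (\<Sum>\<rho>\<in>variants F \<sigma>. if \<rho> = \<tau> then (if \<tau> \<in> cfgs D p then y \<sigma> \<tau> else 0) else 0)"
    unfolding op_mult_eq_sum_variants[OF assms] by (rule sum.cong[OF refl]) (simp add: op_one_def)
  also have "\<dots> = (if \<tau> \<in> variants F \<sigma> then (if \<tau> \<in> cfgs D p then y \<sigma> \<tau> else 0) else 0)"
    by (rule sum.delta[OF local_on_finite_variants[OF assms]])
  also have "\<dots> = y \<sigma> \<tau>"
  proof (cases "\<tau> \<in> variants F \<sigma>")
    case True then have "\<tau> \<in> cfgs D p" unfolding variants_def by simp
    then show ?thesis using True by simp
  next
    case False then have "y \<sigma> \<tau> = 0" using nonzero_subset_variants[OF assms, of \<sigma>] by blast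
    then show ?thesis by simp
  qed
  finally show "op_mult y (op_one D p) \<sigma> \<tau> = y \<sigma> \<tau>" .
qed


lemma op_sum_closed:
  assumes "op_zero \<in> M" "\<And>a b. a \<in> M \<Longrightarrow> b \<in> M \<Longrightarrow> op_add a b \<in> M"
  shows "(\<forall>i\<in>set xs. f i \<in> M) \<Longrightarrow> op_sum xs f \<in> M"
  by (induction xs) (simp_all add: op_sum_Nil op_sum_Cons assms)

lemma op_scale_op_sum: "op_scale c (op_sum xs f) = op_sum xs (\<lambda>i. op_scale c (f i))"
  unfolding op_sum_def op_scale_def by (intro ext) (simp add: sum_list_const_mult)


section \<open>Matrix units and commutants\<close>

definition matrix_unit :: "site \<Rightarrow> nat \<Rightarrow> nat \<Rightarrow> op" where
  "matrix_unit s i j = (\<lambda>\<sigma> \<tau>. if \<sigma> \<in> cfgs D p \<and> \<tau> \<in> cfgs D p \<and> \<sigma> s = i \<and> \<tau> s = j \<and> (\<forall>t. t \<noteq> s \<longrightarrow> \<sigma> t = \<tau> t) then 1 else 0)"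

lemma local_on_matrix_unit:
  assumes "s \<in> sites D"
  shows "local_on D p {s} (matrix_unit s i j)"
proof (rule local_onI)
  show "finite {s}" "{s} \<subseteq> sites D" using assms by auto
  fix \<sigma> \<tau> assume "matrix_unit s i j \<sigma> \<tau> \<noteq> 0"
  then show "\<sigma> \<in> cfgs D p \<and> \<tau> \<in> cfgs D p \<and> (\<forall>t. t\<notin>{s} \<longrightarrow> \<sigma> t = \<tau> t)"
    unfolding matrix_unit_def by (simp split: if_splits)
next
  fix \<sigma> \<tau> \<sigma>' \<tau>' assume c: "\<sigma> \<in> cfgs D p" "\<tau> \<in> cfgs D p" "\<sigma>' \<in> cfgs D p" "\<tau>' \<in> cfgs D p"
   and a: "\<forall>t. t \<notin> {s} \<longrightarrow> \<sigma> t = \<tau> t" "\<forall>t. t \<notin> {s} \<longrightarrow> \<sigma>' t = \<tau>' t"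
   "\<forall>t\<in>{s}. \<sigma> t = \<sigma>' t \<and> \<tau> t = \<tau>' t"
  then show "matrix_unit s i j \<sigma> \<tau> = matrix_unit s i j \<sigma>' \<tau>'" unfolding matrix_unit_def by simp
qed

lemma matrix_unit_eq:
  assumes "s \<in> sites D" "i < p s"
  shows "matrix_unit s i j \<rho> \<tau> = (if \<rho> = \<tau>(s:=i) \<and> \<tau> \<in> cfgs D p \<and> \<tau> s = j then 1 else 0)"
proof -
  have "(\<rho> \<in> cfgs D p \<and> \<tau> \<in> cfgs D p \<and> \<rho> s = i \<and> \<tau> s = j \<and> (\<forall>t. t \<noteq> s \<longrightarrow> \<rho> t = \<tau> t)) \<longleftrightarrow>
        (\<rho> = \<tau>(s:=i) \<and> \<tau> \<in> cfgs D p \<and> \<tau> s = j)"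
  proof
    assume h: "\<rho> \<in> cfgs D p \<and> \<tau> \<in> cfgs D p \<and> \<rho> s = i \<and> \<tau> s = j \<and> (\<forall>t. t \<noteq> s \<longrightarrow> \<rho> t = \<tau> t)"
    then have "\<rho> = \<tau>(s:=i)" by (auto simp: fun_eq_iff)
    then show "\<rho> = \<tau>(s:=i) \<and> \<tau> \<in> cfgs D p \<and> \<tau> s = j" using h by simp
  next
    assume h: "\<rho> = \<tau>(s:=i) \<and> \<tau> \<in> cfgs D p \<and> \<tau> s = j"
    then have "\<rho> \<in> cfgs D p" using cfgs_fun_upd assms by blast
    then show "\<rho> \<in> cfgs D p \<and> \<tau> \<in> cfgs D p \<and> \<rho> s = i \<and> \<tau> s = j \<and> (\<forall>t. t \<noteq> s \<longrightarrow> \<rho> t = \<tau> t)"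
      using h by simp
  qed
  then show ?thesis unfolding matrix_unit_def by simp
qed

lemma op_mult_matrix_unit_left:
  assumes "s \<in> sites D" "j < p s"
  shows "op_mult (matrix_unit s i j) w \<sigma> \<tau> = (if \<sigma> \<in> cfgs D p \<and> \<sigma> s = i then w (\<sigma>(s:=j)) \<tau> else 0)"
proof -
  have nz: "{\<rho>. matrix_unit s i j \<sigma> \<rho> \<noteq> 0} \<subseteq> {\<sigma>(s:=j)}"
  proof
    fix \<rho> assume "\<rho> \<in> {\<rho>. matrix_unit s i j \<sigma> \<rho> \<noteq> 0}"
    then have h: "\<rho> s = j" "\<forall>t. t \<noteq> s \<longrightarrow> \<sigma> t = \<rho> t" unfolding matrix_unit_def
      by (simp_all split: if_splits)
    then have "\<rho> = \<sigma>(s:=j)" by (auto simp: fun_eq_iff)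
    then show "\<rho> \<in> {\<sigma>(s:=j)}" by simp
  qed
  have e: "matrix_unit s i j \<sigma> (\<sigma>(s:=j)) = (if \<sigma> \<in> cfgs D p \<and> \<sigma> s = i then 1 else 0)"
    using cfgs_fun_upd[OF _ assms] unfolding matrix_unit_def by auto
  have f: "finite {\<sigma>(s:=j)}" by simp
  show ?thesis
    unfolding op_mult_eq_sum[where A="{\<sigma>(s:=j)}" and x="matrix_unit s i j" and \<sigma>=\<sigma> and y=w and \<tau>=\<tau>, OF f nz]
    using e by simp
qed

lemma op_mult_matrix_unit_right:
  assumes "s \<in> sites D" "i < p s" "local_on D p F w"
  shows "op_mult w (matrix_unit s i j) \<sigma> \<tau> = (if \<tau> \<in> cfgs D p \<and> \<tau> s = j then w \<sigma> (\<tau>(s:=i)) else 0)"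
proof -
  let ?a = "\<tau>(s:=i)"
  have "op_mult w (matrix_unit s i j) \<sigma> \<tau> = (\<Sum>\<rho>\<in>variants F \<sigma>. if \<rho> = ?a then (if \<tau> \<in> cfgs D p \<and> \<tau> s = j then w \<sigma> ?a else 0) else 0)"
    unfolding op_mult_eq_sum_variants[OF assms(3)]
    by (rule sum.cong[OF refl]) (simp add: matrix_unit_eq[OF assms(1,2)])
  also have "\<dots> = (if ?a \<in> variants F \<sigma> then (if \<tau> \<in> cfgs D p \<and> \<tau> s = j then w \<sigma> ?a else 0) else 0)"
    by (rule sum.delta[OF local_on_finite_variants[OF assms(3)]])
  also have "\<dots> = (if \<tau> \<in> cfgs D p \<and> \<tau> s = j then w \<sigma> ?a else 0)"
  proof (cases "?a \<in> variants F \<sigma>")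
    case False then have "w \<sigma> ?a = 0" using nonzero_subset_variants[OF assms(3), of \<sigma>] by blast
    then show ?thesis by simp
  qed simp
  finally show ?thesis .
qed

lemma local_on_kernel_fun_upd:
  assumes "local_on D p G w" "s \<notin> G" "s \<in> sites D" "k < p s" "a \<in> cfgs D p" "b \<in> cfgs D p" "a s = b s"
  shows "w (a(s:=k)) (b(s:=k)) = w a b"
proof (cases "\<forall>t. t \<notin> G \<longrightarrow> a t = b t")
  case True
  have c: "a(s:=k) \<in> cfgs D p" "b(s:=k) \<in> cfgs D p" using cfgs_fun_upd assms by blast+
  show ?thesis
    by (rule local_on_kernel_eq[OF assms(1) c assms(5,6)]) (use True assms(2) in auto)
next
  case False
  then obtain t where t: "t \<notin> G" "a t \<noteq> b t" by blast
  then have "t \<noteq> s" using assms(7) by auto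
  then have "(a(s:=k)) t \<noteq> (b(s:=k)) t" using t by simp
  then have "w (a(s:=k)) (b(s:=k)) = 0"
    using local_on_nonzeroD[OF assms(1), of "a(s:=k)" "b(s:=k)"] t(1)
    by blast
  moreover have "w a b = 0" using local_on_nonzeroD[OF assms(1), of a b] t by blast
  ultimately show ?thesis by simp
qed

lemma matrix_unit_commute:
  assumes u: "local_on D p F u"
    and s: "s \<notin> F" "s \<in> sites D"
    and ij: "i < p s" "j < p s"
  shows "op_mult (matrix_unit s i j) u = op_mult u (matrix_unit s i j)"
proof (intro ext)
  fix \<sigma> \<tau>
  have L: "op_mult (matrix_unit s i j) u \<sigma> \<tau> = (if \<sigma> \<in> cfgs D p \<and> \<sigma> s = i then u (\<sigma>(s:=j)) \<tau> else 0)"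
    by (rule op_mult_matrix_unit_left[OF s(2) ij(2)])
  have R: "op_mult u (matrix_unit s i j) \<sigma> \<tau> = (if \<tau> \<in> cfgs D p \<and> \<tau> s = j then u \<sigma> (\<tau>(s:=i)) else 0)"
    by (rule op_mult_matrix_unit_right[OF s(2) ij(1) u])
  have z1: "u \<sigma>' \<tau>' = 0" if "\<sigma>' s \<noteq> \<tau>' s" for \<sigma>' \<tau>'
    using local_on_nonzeroD[OF u, of \<sigma>' \<tau>'] that s(1) by blast
  have z2: "u \<sigma>' \<tau>' = 0" if "\<sigma>' \<notin> cfgs D p \<or> \<tau>' \<notin> cfgs D p" for \<sigma>' \<tau>'
    using local_on_nonzeroD[OF u, of \<sigma>' \<tau>'] that by blast
  show "op_mult (matrix_unit s i j) u \<sigma> \<tau> = op_mult u (matrix_unit s i j) \<sigma> \<tau>"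
  proof (cases "\<sigma> \<in> cfgs D p \<and> \<tau> \<in> cfgs D p")
    case False then show ?thesis unfolding L R using z2 by auto
  next
    case True
    then have c: "\<sigma> \<in> cfgs D p" "\<tau> \<in> cfgs D p" by auto
    show ?thesis
    proof (cases "\<sigma> s = i \<and> \<tau> s = j")
      case True
      have a: "\<sigma>(s:=j) \<in> cfgs D p" using cfgs_fun_upd[OF c(1) s(2) ij(2)] .
      have "u ((\<sigma>(s:=j))(s:=i)) (\<tau>(s:=i)) = u (\<sigma>(s:=j)) \<tau>"
        by (rule local_on_kernel_fun_upd[OF u s(1) s(2) ij(1) a c(2)]) (use True in simp)
      moreover have "(\<sigma>(s:=j))(s:=i) = \<sigma>" using True by auto
      ultimately show ?thesis unfolding L R using True c by simp
    next
      case False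
      have "u (\<sigma>(s:=j)) \<tau> = 0" if "\<sigma> s = i" using False that z1[of "\<sigma>(s:=j)" \<tau>] by simp
      moreover have "u \<sigma> (\<tau>(s:=i)) = 0" if "\<tau> s = j" using False that z1[of \<sigma> "\<tau>(s:=i)"] by simp
      ultimately show ?thesis unfolding L R using False by auto
    qed
  qed
qed

lemma commute_matrix_unit_kernel:
  assumes w: "local_on D p G w" and s: "s \<in> sites D"
    and cm: "\<And>i j. i < p s \<Longrightarrow> j < p s \<Longrightarrow> op_mult (matrix_unit s i j) w = op_mult w (matrix_unit s i j)"
    and "\<sigma> \<in> cfgs D p" "\<tau> \<in> cfgs D p" "i < p s" "k < p s"
  shows "(if \<sigma> s = i then w (\<sigma>(s := k)) \<tau> else 0) = (if \<tau> s = k then w \<sigma> (\<tau>(s := i)) else 0)"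
proof -
  have "op_mult (matrix_unit s i k) w \<sigma> \<tau> = op_mult w (matrix_unit s i k) \<sigma> \<tau>"
    using cm assms(6,7) by simp
  then show ?thesis
    unfolding op_mult_matrix_unit_left[OF s assms(7)] op_mult_matrix_unit_right[OF s assms(6) w]
    using assms(4,5) by simp
qed

lemma local_on_Diff_site_if_commute:
  assumes w: "local_on D p G w"
    and s: "s \<in> sites D"
    and cm: "\<And>i j. i < p s \<Longrightarrow> j < p s \<Longrightarrow> op_mult (matrix_unit s i j) w = op_mult w (matrix_unit s i j)"
  shows "local_on D p (G - {s}) w"
proof -
  have rel: "(if \<sigma> s = i then w (\<sigma>(s := k)) \<tau> else 0) = (if \<tau> s = k then w \<sigma> (\<tau>(s := i)) else 0)"
    if "\<sigma> \<in> cfgs D p" "\<tau> \<in> cfgs D p" "i < p s" "k < p s" for \<sigma> \<tau> i k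
    using commute_matrix_unit_kernel[OF w s cm that] .
  show ?thesis
  proof (rule local_onI)
    show "finite (G - {s})" "G - {s} \<subseteq> sites D"
      using local_on_finite[OF w] local_on_subset_sites[OF w]
      by auto
    fix \<sigma> \<tau> assume nz: "w \<sigma> \<tau> \<noteq> 0"
    from local_on_nonzeroD[OF w nz] have c: "\<sigma> \<in> cfgs D p" "\<tau> \<in> cfgs D p" and ag: "\<forall>t. t\<notin>G \<longrightarrow> \<sigma> t = \<tau> t"
      by auto
    have lt: "\<sigma> s < p s" using c(1) s unfolding cfgs_def by auto
    have "\<tau> s = \<sigma> s"
    proof (rule ccontr)
      assume "\<tau> s \<noteq> \<sigma> s"
      then have "w \<sigma> \<tau> = 0" using rel[OF c lt lt] by simp
      then show False using nz by simp
    qed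
    then show "\<sigma> \<in> cfgs D p \<and> \<tau> \<in> cfgs D p \<and> (\<forall>t. t\<notin>G - {s} \<longrightarrow> \<sigma> t = \<tau> t)" using c ag by auto
  next
    fix \<sigma> \<tau> \<sigma>' \<tau>' assume c: "\<sigma> \<in> cfgs D p" "\<tau> \<in> cfgs D p" "\<sigma>' \<in> cfgs D p" "\<tau>' \<in> cfgs D p"
     and a1: "\<forall>t. t \<notin> G - {s} \<longrightarrow> \<sigma> t = \<tau> t" and a2: "\<forall>t. t \<notin> G - {s} \<longrightarrow> \<sigma>' t = \<tau>' t"
     and a3: "\<forall>t\<in>G - {s}. \<sigma> t = \<sigma>' t \<and> \<tau> t = \<tau>' t"
    define a where "a = \<sigma> s"
    define b where "b = \<sigma>' s"
    have ta: "\<tau> s = a" using a1 a_def by simp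
    have tb: "\<tau>' s = b" using a2 b_def by simp
    have alt: "a < p s" "b < p s" using c(1,3) s unfolding a_def b_def cfgs_def by auto
    have c2: "\<tau>(s:=b) \<in> cfgs D p" "\<sigma>(s:=b) \<in> cfgs D p"
      using cfgs_fun_upd[OF c(2) s alt(2)] cfgs_fun_upd[OF c(1) s alt(2)]
      by auto
    have "(if \<sigma> s = a then w (\<sigma>(s:=b)) (\<tau>(s:=b)) else 0) = (if (\<tau>(s:=b)) s = b then w \<sigma> ((\<tau>(s:=b))(s:=a)) else 0)"
      by (rule rel[OF c(1) c2(1) alt(1) alt(2)])
    moreover have "(\<tau>(s:=b))(s:=a) = \<tau>" using ta by auto
    ultimately have e1: "w (\<sigma>(s:=b)) (\<tau>(s:=b)) = w \<sigma> \<tau>" using a_def by simp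
    have e2: "w (\<sigma>(s:=b)) (\<tau>(s:=b)) = w \<sigma>' \<tau>'"
    proof (rule local_on_kernel_eq[OF w c2(2) c2(1) c(3,4)])
      show "\<forall>t. t \<notin> G \<longrightarrow> (\<sigma>(s:=b)) t = (\<tau>(s:=b)) t" using a1 by simp
      show "\<forall>t. t \<notin> G \<longrightarrow> \<sigma>' t = \<tau>' t" using a2 by simp
      show "\<forall>t\<in>G. (\<sigma>(s:=b)) t = \<sigma>' t \<and> (\<tau>(s:=b)) t = \<tau>' t" using a3 b_def tb by simp
    qed
    show "w \<sigma> \<tau> = w \<sigma>' \<tau>'" using e1 e2 by simp
  qed
qed

lemma local_on_Diff_if_commute:
  assumes "finite X"
  shows "local_on D p G w \<Longrightarrow> X \<subseteq> sites D \<Longrightarrow>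
    (\<And>t i j. t \<in> X \<Longrightarrow> i < p t \<Longrightarrow> j < p t \<Longrightarrow> op_mult (matrix_unit t i j) w = op_mult w (matrix_unit t i j)) \<Longrightarrow>
    local_on D p (G - X) w"
  using assms
proof (induction X rule: finite_induct)
  case empty then show ?case by simp
next
  case (insert t X)
  have "local_on D p (G - X) w" using insert by blast
  then have "local_on D p (G - X - {t}) w"
    by (rule local_on_Diff_site_if_commute) (use insert in auto)
  moreover have "G - X - {t} = G - insert t X" by auto
  ultimately show ?case by simp
qed

section \<open>Product decompositions\<close>

definition slice :: "site \<Rightarrow> nat \<Rightarrow> nat \<Rightarrow> op \<Rightarrow> op" where
  "slice s i j y = (\<lambda>\<sigma> \<tau>. if \<sigma> \<in> cfgs D p \<and> \<tau> \<in> cfgs D p \<and> \<sigma> s = \<tau> s then y (\<sigma>(s:=i)) (\<tau>(s:=j)) else 0)"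

lemma local_on_slice:
  assumes y: "local_on D p G y"
    and s: "s \<in> G"
    and ij: "i < p s" "j < p s"
  shows "local_on D p (G - {s}) (slice s i j y)"
proof -
  have ss: "s \<in> sites D" using s local_on_subset_sites[OF y] by auto
  show ?thesis
  proof (rule local_onI)
    show "finite (G - {s})" "G - {s} \<subseteq> sites D"
      using local_on_finite[OF y] local_on_subset_sites[OF y]
      by auto
    fix \<sigma> \<tau> assume nz: "slice s i j y \<sigma> \<tau> \<noteq> 0"
    then have h: "\<sigma> \<in> cfgs D p" "\<tau> \<in> cfgs D p" "\<sigma> s = \<tau> s" "y (\<sigma>(s:=i)) (\<tau>(s:=j)) \<noteq> 0"
      unfolding slice_def by (simp_all split: if_splits)
    from local_on_nonzeroD[OF y h(4)] have "\<forall>t. t \<notin> G \<longrightarrow> (\<sigma>(s:=i)) t = (\<tau>(s:=j)) t" by blast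
    then have "\<forall>t. t \<notin> G - {s} \<longrightarrow> \<sigma> t = \<tau> t" using h(3) s by (metis DiffI fun_upd_other singletonD)
    then show "\<sigma> \<in> cfgs D p \<and> \<tau> \<in> cfgs D p \<and> (\<forall>t. t\<notin>G - {s} \<longrightarrow> \<sigma> t = \<tau> t)" using h by simp
  next
    fix \<sigma> \<tau> \<sigma>' \<tau>' assume c: "\<sigma> \<in> cfgs D p" "\<tau> \<in> cfgs D p" "\<sigma>' \<in> cfgs D p" "\<tau>' \<in> cfgs D p"
     and a1: "\<forall>t. t \<notin> G - {s} \<longrightarrow> \<sigma> t = \<tau> t" and a2: "\<forall>t. t \<notin> G - {s} \<longrightarrow> \<sigma>' t = \<tau>' t"
     and a3: "\<forall>t\<in>G - {s}. \<sigma> t = \<sigma>' t \<and> \<tau> t = \<tau>' t"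
    have e: "\<sigma> s = \<tau> s" "\<sigma>' s = \<tau>' s" using a1 a2 by auto
    have c2: "\<sigma>(s:=i) \<in> cfgs D p" "\<tau>(s:=j) \<in> cfgs D p" "\<sigma>'(s:=i) \<in> cfgs D p" "\<tau>'(s:=j) \<in> cfgs D p"
      using cfgs_fun_upd ss ij c by blast+
    have "y (\<sigma>(s:=i)) (\<tau>(s:=j)) = y (\<sigma>'(s:=i)) (\<tau>'(s:=j))"
    proof (rule local_on_kernel_eq[OF y c2])
      show "\<forall>t. t \<notin> G \<longrightarrow> (\<sigma>(s:=i)) t = (\<tau>(s:=j)) t" using a1 s by auto
      show "\<forall>t. t \<notin> G \<longrightarrow> (\<sigma>'(s:=i)) t = (\<tau>'(s:=j)) t" using a2 s by auto
      show "\<forall>t\<in>G. (\<sigma>(s:=i)) t = (\<sigma>'(s:=i)) t \<and> (\<tau>(s:=j)) t = (\<tau>'(s:=j)) t" using a3 by auto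
    qed
    then show "slice s i j y \<sigma> \<tau> = slice s i j y \<sigma>' \<tau>'" unfolding slice_def using c e by simp
  qed
qed

definition index_pairs :: "nat \<Rightarrow> (nat \<times> nat) list" where
  "index_pairs P = List.product [0..<P] [0..<P]"

lemma sum_list_index_pairs: "sum_list (map f (index_pairs P)) = (\<Sum>ij\<in>{..<P} \<times> {..<P}. f ij)" for f :: "_ \<Rightarrow> complex"
proof -
  have "distinct (index_pairs P)" unfolding index_pairs_def by (simp add: distinct_product)
  then have "sum_list (map f (index_pairs P)) = sum f (set (index_pairs P))"
    by (rule sum_list_distinct_conv_sum_set)
  moreover have "set (index_pairs P) = {..<P} \<times> {..<P}" unfolding index_pairs_def by auto
  ultimately show ?thesis by simp
qed

lemma set_index_pairs: "set (index_pairs P) = {..<P} \<times> {..<P}" unfolding index_pairs_def by auto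

lemma op_mult_matrix_unit_slice:
  assumes s: "s \<in> sites D" and ij: "i < p s" "j < p s"
  shows "op_mult (matrix_unit s i j) (slice s i j y) \<sigma> \<tau> =
    (if (i, j) = (\<sigma> s, \<tau> s) \<and> \<sigma> \<in> cfgs D p \<and> \<tau> \<in> cfgs D p then y \<sigma> \<tau> else 0)"
proof (cases "\<sigma> \<in> cfgs D p \<and> \<sigma> s = i \<and> \<tau> \<in> cfgs D p \<and> \<tau> s = j")
  case True
  then have "\<sigma>(s := j) \<in> cfgs D p" "(\<sigma>(s := j))(s := i) = \<sigma>" "\<tau>(s := j) = \<tau>"
    using cfgs_fun_upd[OF _ s ij(2)] by auto
  with True show ?thesis
    unfolding op_mult_matrix_unit_left[OF s ij(2)] slice_def by simp
next
  case False
  then show ?thesis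
    unfolding op_mult_matrix_unit_left[OF s ij(2)] slice_def by auto
qed

lemma matrix_unit_expansion:
  assumes y: "local_on D p G y" and s: "s \<in> G"
  shows "y = op_sum (index_pairs (p s)) (\<lambda>(i, j). op_mult (matrix_unit s i j) (slice s i j y))"
proof (intro ext)
  fix \<sigma> \<tau>
  have s_sites: "s \<in> sites D" using s local_on_subset_sites[OF y] by auto
  let ?y = "if \<sigma> \<in> cfgs D p \<and> \<tau> \<in> cfgs D p then y \<sigma> \<tau> else 0"
  have "op_sum (index_pairs (p s)) (\<lambda>(i, j). op_mult (matrix_unit s i j) (slice s i j y)) \<sigma> \<tau> =
    (\<Sum>ij\<in>{..<p s} \<times> {..<p s}. (case ij of (i, j) \<Rightarrow> op_mult (matrix_unit s i j) (slice s i j y)) \<sigma> \<tau>)"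
    unfolding op_sum_def by (rule sum_list_index_pairs)
  also have "\<dots> = (\<Sum>ij\<in>{..<p s} \<times> {..<p s}. if ij = (\<sigma> s, \<tau> s) then ?y else 0)"
    by (rule sum.cong) (auto simp: op_mult_matrix_unit_slice[OF s_sites] split: if_splits)
  also have "\<dots> = (if (\<sigma> s, \<tau> s) \<in> {..<p s} \<times> {..<p s} then ?y else 0)"
    by (rule sum.delta) simp
  also have "\<dots> = y \<sigma> \<tau>"
  proof (cases "\<sigma> \<in> cfgs D p \<and> \<tau> \<in> cfgs D p")
    case True
    then have "(\<sigma> s, \<tau> s) \<in> {..<p s} \<times> {..<p s}" using s_sites by (auto simp: cfgs_def)
    with True show ?thesis by simp
  next
    case False
    then show ?thesis using local_on_nonzeroD[OF y, of \<sigma> \<tau>] by auto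
  qed
  finally show "y \<sigma> \<tau> = op_sum (index_pairs (p s)) (\<lambda>(i, j). op_mult (matrix_unit s i j) (slice s i j y)) \<sigma> \<tau>"
    by simp
qed


lemma op_mult_disjoint_apply:
  assumes x: "local_on D p F x" and y: "local_on D p G y" and FG: "F \<inter> G = {}"
    and \<rho>: "\<rho> \<in> variants F \<sigma>" "\<forall>t. t \<notin> G \<longrightarrow> \<rho> t = \<tau> t"
  shows "op_mult x y \<sigma> \<tau> = x \<sigma> \<rho> * y \<rho> \<tau>"
proof -
  have "x \<sigma> \<rho>' * y \<rho>' \<tau> = 0" if "\<rho>' \<in> variants F \<sigma>" "\<rho>' \<noteq> \<rho>" for \<rho>'
  proof (rule ccontr)
    assume "x \<sigma> \<rho>' * y \<rho>' \<tau> \<noteq> 0"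
    then have "\<forall>t. t \<notin> G \<longrightarrow> \<rho>' t = \<tau> t"
      using local_on_nonzeroD[OF y] by auto
    moreover have "\<forall>t. t \<notin> F \<longrightarrow> \<rho>' t = \<sigma> t" "\<forall>t. t \<notin> F \<longrightarrow> \<rho> t = \<sigma> t"
      using that(1) \<rho>(1) by (auto simp: variants_def)
    ultimately have "\<rho>' = \<rho>"
      using \<rho>(2) FG by (intro ext) (metis disjoint_iff)
    with that(2) show False ..
  qed
  then have "(\<Sum>\<rho>'\<in>variants F \<sigma>. x \<sigma> \<rho>' * y \<rho>' \<tau>) = (\<Sum>\<rho>'\<in>{\<rho>}. x \<sigma> \<rho>' * y \<rho>' \<tau>)"
    using \<rho>(1) by (intro sum.mono_neutral_right[OF local_on_finite_variants[OF x]]) auto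
  then show ?thesis
    using op_mult_eq_sum_variants[OF x] by simp
qed

lemma op_mult_commute_disjoint:
  assumes x: "local_on D p F x" and y: "local_on D p G y" and FG: "F \<inter> G = {}"
  shows "op_mult x y = op_mult y x"
proof (intro ext)
  fix \<sigma> \<tau>
  show "op_mult x y \<sigma> \<tau> = op_mult y x \<sigma> \<tau>"
  proof (cases "\<sigma> \<in> cfgs D p \<and> \<tau> \<in> cfgs D p \<and> (\<forall>t. t \<notin> F \<union> G \<longrightarrow> \<sigma> t = \<tau> t)")
    case False
    then show ?thesis
      using local_on_nonzeroD[OF local_on_op_mult[OF x y]] local_on_nonzeroD[OF local_on_op_mult[OF y x]]
      by (metis sup_commute)
  next
    case True
    then have c: "\<sigma> \<in> cfgs D p" "\<tau> \<in> cfgs D p" and agree: "\<forall>t. t \<notin> F \<union> G \<longrightarrow> \<sigma> t = \<tau> t" by auto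
    define \<rho>1 where "\<rho>1 = (\<lambda>t. if t \<in> F then \<tau> t else \<sigma> t)"
    define \<rho>2 where "\<rho>2 = (\<lambda>t. if t \<in> G then \<tau> t else \<sigma> t)"
    have \<rho>: "\<rho>1 \<in> cfgs D p" "\<rho>2 \<in> cfgs D p"
      unfolding \<rho>1_def \<rho>2_def using c by (auto intro: cfgs_if)
    have "op_mult x y \<sigma> \<tau> = x \<sigma> \<rho>1 * y \<rho>1 \<tau>"
      using \<rho> agree by (intro op_mult_disjoint_apply[OF x y FG]) (auto simp: variants_def \<rho>1_def)
    also have "x \<sigma> \<rho>1 = x \<rho>2 \<tau>"
      using FG agree
      by (intro local_on_kernel_eq[OF x c(1) \<rho>(1) \<rho>(2) c(2)]) (auto simp: \<rho>1_def \<rho>2_def)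
    also have "y \<rho>1 \<tau> = y \<sigma> \<rho>2"
      using FG agree
      by (intro local_on_kernel_eq[OF y \<rho>(1) c(2) c(1) \<rho>(2)]) (auto simp: \<rho>1_def \<rho>2_def)
    also have "x \<rho>2 \<tau> * y \<sigma> \<rho>2 = op_mult y x \<sigma> \<tau>"
      using \<rho> agree FG
      by (subst op_mult_disjoint_apply[OF y x _, of \<rho>2]) (auto simp: variants_def \<rho>2_def)
    finally show ?thesis .
  qed
qed

lemma op_add_zero_right: "op_add y op_zero = y"
  by (simp add: op_add_def op_zero_def)

lemma op_mult_matrix_unit_op_sum_prods:
  assumes s: "s \<in> sites D" "s \<notin> A" "i < p s" "j < p s"
    and ab: "\<forall>(u, v)\<in>set ab. local_on D p A u \<and> local_on D p B v"
  shows "op_mult (matrix_unit s i j) (op_sum ab (\<lambda>(u, v). op_mult u v)) =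
    op_sum ab (\<lambda>(u, v). op_mult u (op_mult (matrix_unit s i j) v))"
proof -
  let ?e = "matrix_unit s i j"
  have e: "local_on D p {s} ?e" by (rule local_on_matrix_unit[OF s(1)])
  have "op_mult ?e (op_mult u v) = op_mult u (op_mult ?e v)" if "(u, v) \<in> set ab" for u v
  proof -
    have u: "local_on D p A u" and v: "local_on D p B v" using ab that by auto
    have "op_mult ?e (op_mult u v) = op_mult (op_mult ?e u) v"
      by (rule op_mult_assoc[OF e u v, symmetric])
    also have "\<dots> = op_mult (op_mult u ?e) v"
      using matrix_unit_commute[OF u s(2,1,3,4)] by simp
    also have "\<dots> = op_mult u (op_mult ?e v)"
      by (rule op_mult_assoc[OF u e v])
    finally show ?thesis .
  qed
  then show ?thesis
    unfolding op_mult_op_sum_right[OF e] by (intro op_sum_cong) auto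
qed

text \<open>Expanding in matrix units at one site at a time moves the factors at the sites of \<open>B\<close>
  to the right, since they commute with everything on \<open>A\<close>.\<close>
lemma local_on_Un_product_decomposition:
  assumes "finite B" "local_on D p (A \<union> B) y" "A \<inter> B = {}"
  shows "\<exists>ab. y = op_sum ab (\<lambda>(u, v). op_mult u v) \<and> (\<forall>(u, v)\<in>set ab. local_on D p A u \<and> local_on D p B v)"
  using assms
proof (induction B arbitrary: y rule: finite_induct)
  case empty
  then have "y = op_sum [(y, op_one D p)] (\<lambda>(u, v). op_mult u v)"
    by (simp add: op_sum_Cons op_sum_Nil op_add_zero_right op_mult_one_right)
  then show ?case using empty.prems(1) local_on_op_one by auto
next
  case (insert s B)
  have y: "local_on D p (A \<union> insert s B) y" and s: "s \<in> sites D" "s \<notin> A"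
    using insert.prems local_on_subset_sites by auto
  let ?P = "index_pairs (p s)" and ?e = "\<lambda>ij. matrix_unit s (fst ij) (snd ij)"
  have "\<forall>ij\<in>set ?P. \<exists>ab. slice s (fst ij) (snd ij) y = op_sum ab (\<lambda>(u, v). op_mult u v) \<and>
    (\<forall>(u, v)\<in>set ab. local_on D p A u \<and> local_on D p B v)"
  proof
    fix ij assume "ij \<in> set ?P"
    then have "local_on D p (A \<union> B) (slice s (fst ij) (snd ij) y)"
      using local_on_slice[OF y, of s "fst ij" "snd ij"] insert.hyps(2) s(2)
      by (auto simp: set_index_pairs insert_Diff_if Un_Diff)
    then show "\<exists>ab. slice s (fst ij) (snd ij) y = op_sum ab (\<lambda>(u, v). op_mult u v) \<and>
      (\<forall>(u, v)\<in>set ab. local_on D p A u \<and> local_on D p B v)"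
      using insert.IH insert.prems(2) by blast
  qed
  then have "\<exists>g. \<forall>ij\<in>set ?P. slice s (fst ij) (snd ij) y = op_sum (g ij) (\<lambda>(u, v). op_mult u v) \<and>
    (\<forall>(u, v)\<in>set (g ij). local_on D p A u \<and> local_on D p B v)"
    by (rule bchoice)
  then obtain g where g: "\<forall>ij\<in>set ?P. slice s (fst ij) (snd ij) y = op_sum (g ij) (\<lambda>(u, v). op_mult u v) \<and>
    (\<forall>(u, v)\<in>set (g ij). local_on D p A u \<and> local_on D p B v)"
    by blast
  define ab where "ab = concat (map (\<lambda>ij. map (\<lambda>(u, v). (u, op_mult (?e ij) v)) (g ij)) ?P)"
  have "y = op_sum ?P (\<lambda>ij. op_mult (?e ij) (slice s (fst ij) (snd ij) y))"
    using matrix_unit_expansion[OF y, of s] by (simp add: case_prod_unfold)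
  also have "\<dots> = op_sum ?P (\<lambda>ij. op_sum (g ij) (\<lambda>(u, v). op_mult u (op_mult (?e ij) v)))"
  proof (rule op_sum_cong)
    fix ij assume ij: "ij \<in> set ?P"
    with g have "\<forall>(u, v)\<in>set (g ij). local_on D p A u \<and> local_on D p B v" by blast
    with ij g s show "op_mult (?e ij) (slice s (fst ij) (snd ij) y) =
      op_sum (g ij) (\<lambda>(u, v). op_mult u (op_mult (?e ij) v))"
      using op_mult_matrix_unit_op_sum_prods[of s A "fst ij" "snd ij" "g ij" B]
      by (auto simp: set_index_pairs)
  qed
  also have "\<dots> = op_sum ab (\<lambda>(u, v). op_mult u v)"
    unfolding ab_def op_sum_concat op_sum_map by (simp add: case_prod_unfold)
  finally have "y = op_sum ab (\<lambda>(u, v). op_mult u v)" .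
  moreover have "\<forall>(u, v)\<in>set ab. local_on D p A u \<and> local_on D p (insert s B) v"
    using g local_on_op_mult[OF local_on_matrix_unit[OF s(1)]] by (fastforce simp: ab_def)
  ultimately show ?case by blast
qed

lemma Mat_iff: "x \<in> Mat D p X \<longleftrightarrow> (\<exists>F. F \<subseteq> X \<and> local_on D p F x)"
  unfolding Mat_def using local_on_finite by blast

lemma Mat_sites_iff: "x \<in> Mat D p (sites D) \<longleftrightarrow> (\<exists>F. local_on D p F x)"
  unfolding Mat_iff using local_on_subset_sites by blast

lemma Mat_subset_Mat_sites: "Mat D p X \<subseteq> Mat D p (sites D)"
  unfolding subset_iff Mat_iff using local_on_subset_sites by blast

lemma op_zero_in_Mat: "op_zero \<in> Mat D p X"
  using local_on_op_zero[of "{}"] unfolding Mat_iff by blast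

lemma op_one_in_Mat: "op_one D p \<in> Mat D p X"
  using local_on_op_one unfolding Mat_iff by blast

lemma Mat_common_support:
  assumes "x \<in> Mat D p X" "y \<in> Mat D p X"
  obtains F where "F \<subseteq> X" "local_on D p F x" "local_on D p F y"
proof -
  obtain F G where F: "F \<subseteq> X" "local_on D p F x" and G: "G \<subseteq> X" "local_on D p G y"
    using assms unfolding Mat_iff by blast
  have "finite (F \<union> G)" "F \<union> G \<subseteq> sites D"
    using F G local_on_finite local_on_subset_sites by blast+
  then show thesis
    using that[of "F \<union> G"] F G local_on_mono[of F x "F \<union> G"] local_on_mono[of G y "F \<union> G"] by blast
qed

lemma Mat_op_add: "x \<in> Mat D p X \<Longrightarrow> y \<in> Mat D p X \<Longrightarrow> op_add x y \<in> Mat D p X"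
  by (metis Mat_common_support Mat_iff local_on_op_add)

lemma Mat_op_mult: "x \<in> Mat D p X \<Longrightarrow> y \<in> Mat D p X \<Longrightarrow> op_mult x y \<in> Mat D p X"
  by (metis Mat_common_support Mat_iff local_on_op_mult sup.idem)

lemma Mat_op_scale: "x \<in> Mat D p X \<Longrightarrow> op_scale c x \<in> Mat D p X"
  unfolding Mat_iff using local_on_op_scale by blast

lemma Mat_op_adj: "x \<in> Mat D p X \<Longrightarrow> op_adj x \<in> Mat D p X"
  unfolding Mat_iff using local_on_op_adj by blast

lemma Mat_disjoint_commute:
  assumes "x \<in> Mat D p X" "y \<in> Mat D p Y" "X \<inter> Y = {}"
  shows "op_mult x y = op_mult y x"
proof -
  obtain F G where "F \<subseteq> X" "local_on D p F x" "G \<subseteq> Y" "local_on D p G y"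
    using assms(1,2) unfolding Mat_iff by blast
  with assms(3) show ?thesis
    by (intro op_mult_commute_disjoint) blast+
qed

section \<open>Partial traces\<close>

lemma sum_index_pairs_delta:
  fixes P :: nat
  shows "(\<Sum>ij\<in>{..<P} \<times> {..<P}. if fst ij = a then h (snd ij) else 0) =
   (if a < P then (\<Sum>j<P. h j) else (0::complex))"
proof -
  have "(\<Sum>ij\<in>{..<P} \<times> {..<P}. if fst ij = a then h (snd ij) else 0) =
        (\<Sum>i<P. \<Sum>j<P. if i = a then h j else 0)"
    by (simp add: sum.cartesian_product case_prod_beta)
  also have "\<dots> = (\<Sum>i<P. if i = a then (\<Sum>j<P. h j) else 0)"
    by (rule sum.cong[OF refl]) simp
  also have "\<dots> = (if a \<in> {..<P} then (\<Sum>j<P. h j) else 0)" by (rule sum.delta) simp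
  finally show ?thesis by simp
qed

context assumes ppos: "\<forall>s\<in>sites D. 0 < p s"
begin

text \<open>\<open>(1/d) \<Sum>\<^sub>i\<^sub>j e\<^sub>i\<^sub>j w e\<^sub>j\<^sub>i\<close> is the normalised partial trace of \<open>w\<close> over the site \<open>s\<close>,
  tensored with the identity at \<open>s\<close>.\<close>
definition partial_trace :: "site \<Rightarrow> op \<Rightarrow> op" where
  "partial_trace s w = op_sum (index_pairs (p s)) (\<lambda>ij. op_scale (1 / of_nat (p s))
      (op_mult (op_mult (matrix_unit s (fst ij) (snd ij)) w) (matrix_unit s (snd ij) (fst ij))))"

lemma partial_trace_apply:
  assumes w: "local_on D p G w"
    and s: "s \<in> sites D"
  shows "partial_trace s w \<sigma> \<tau> = (if \<sigma> \<in> cfgs D p \<and> \<tau> \<in> cfgs D p \<and> \<sigma> s = \<tau> s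
      then (1 / of_nat (p s)) * (\<Sum>j<p s. w (\<sigma>(s:=j)) (\<tau>(s:=j))) else 0)"
proof -
  let ?c = "1 / (of_nat (p s) :: complex)"
  have tm: "op_scale ?c (op_mult (op_mult (matrix_unit s (fst ij) (snd ij)) w) (matrix_unit s (snd ij) (fst ij))) \<sigma> \<tau> =
     (if fst ij = \<sigma> s then (if \<sigma> \<in> cfgs D p \<and> \<tau> \<in> cfgs D p \<and> \<sigma> s = \<tau> s then ?c * w (\<sigma>(s:=snd ij)) (\<tau>(s:=snd ij)) else 0) else 0)"
    if ij: "ij \<in> {..<p s} \<times> {..<p s}" for ij
  proof -
    have i: "fst ij < p s" "snd ij < p s" using ij by auto
    have le: "local_on D p ({s} \<union> G) (op_mult (matrix_unit s (fst ij) (snd ij)) w)"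
      by (rule local_on_op_mult[OF local_on_matrix_unit[OF s] w])
    show ?thesis
      unfolding op_scale_def op_mult_matrix_unit_right[OF s i(2) le] op_mult_matrix_unit_left[OF s i(2)]
      by auto
  qed
  have "partial_trace s w \<sigma> \<tau> = (\<Sum>ij\<in>{..<p s} \<times> {..<p s}.
      op_scale ?c (op_mult (op_mult (matrix_unit s (fst ij) (snd ij)) w) (matrix_unit s (snd ij) (fst ij))) \<sigma> \<tau>)"
    unfolding partial_trace_def op_sum_def by (rule sum_list_index_pairs)
  also have "\<dots> = (\<Sum>ij\<in>{..<p s} \<times> {..<p s}. (if fst ij = \<sigma> s then (if \<sigma> \<in> cfgs D p \<and> \<tau> \<in> cfgs D p \<and> \<sigma> s = \<tau> s then ?c * w (\<sigma>(s:=snd ij)) (\<tau>(s:=snd ij)) else 0) else 0))"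
    by (rule sum.cong[OF refl]) (rule tm)
  also have "\<dots> = (if \<sigma> s < p s then (\<Sum>j<p s. (if \<sigma> \<in> cfgs D p \<and> \<tau> \<in> cfgs D p \<and> \<sigma> s = \<tau> s then ?c * w (\<sigma>(s:=j)) (\<tau>(s:=j)) else 0)) else 0)"
    by (rule sum_index_pairs_delta)
  also have "\<dots> = (if \<sigma> \<in> cfgs D p \<and> \<tau> \<in> cfgs D p \<and> \<sigma> s = \<tau> s
      then ?c * (\<Sum>j<p s. w (\<sigma>(s:=j)) (\<tau>(s:=j))) else 0)"
  proof (cases "\<sigma> \<in> cfgs D p \<and> \<tau> \<in> cfgs D p \<and> \<sigma> s = \<tau> s")
    case True then have "\<sigma> s < p s" using s unfolding cfgs_def by auto
    then show ?thesis using True by (simp add: sum_distrib_left)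
  next
    case False then show ?thesis
      by (simp only: if_not_P[OF False] if_False sum.neutral_const if_cancel)
  qed
  finally show ?thesis .
qed

lemma local_on_partial_trace:
  assumes w: "local_on D p G w"
    and s: "s \<in> sites D"
  shows "local_on D p (G - {s}) (partial_trace s w)"
proof (rule local_onI)
  show "finite (G - {s})" "G - {s} \<subseteq> sites D"
    using local_on_finite[OF w] local_on_subset_sites[OF w]
    by auto
  fix \<sigma> \<tau> assume nz: "partial_trace s w \<sigma> \<tau> \<noteq> 0"
  then have h: "\<sigma> \<in> cfgs D p" "\<tau> \<in> cfgs D p" "\<sigma> s = \<tau> s" "(\<Sum>j<p s. w (\<sigma>(s:=j)) (\<tau>(s:=j))) \<noteq> 0"
    unfolding partial_trace_apply[OF w s] by (simp_all split: if_splits)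
  obtain j where "w (\<sigma>(s:=j)) (\<tau>(s:=j)) \<noteq> 0"
    using h(4) by (rule sum.not_neutral_contains_not_neutral)
  from local_on_nonzeroD[OF w this] have "\<forall>t. t \<notin> G \<longrightarrow> (\<sigma>(s:=j)) t = (\<tau>(s:=j)) t" by blast
  then have "\<forall>t. t \<notin> G - {s} \<longrightarrow> \<sigma> t = \<tau> t" using h(3) by (metis DiffI fun_upd_other singletonD)
  then show "\<sigma> \<in> cfgs D p \<and> \<tau> \<in> cfgs D p \<and> (\<forall>t. t\<notin>G - {s} \<longrightarrow> \<sigma> t = \<tau> t)" using h by simp
next
  fix \<sigma> \<tau> \<sigma>' \<tau>' assume c: "\<sigma> \<in> cfgs D p" "\<tau> \<in> cfgs D p" "\<sigma>' \<in> cfgs D p" "\<tau>' \<in> cfgs D p"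
   and a1: "\<forall>t. t \<notin> G - {s} \<longrightarrow> \<sigma> t = \<tau> t" and a2: "\<forall>t. t \<notin> G - {s} \<longrightarrow> \<sigma>' t = \<tau>' t"
   and a3: "\<forall>t\<in>G - {s}. \<sigma> t = \<sigma>' t \<and> \<tau> t = \<tau>' t"
  have e: "\<sigma> s = \<tau> s" "\<sigma>' s = \<tau>' s" using a1 a2 by auto
  have "(\<Sum>j<p s. w (\<sigma>(s:=j)) (\<tau>(s:=j))) = (\<Sum>j<p s. w (\<sigma>'(s:=j)) (\<tau>'(s:=j)))"
  proof (rule sum.cong[OF refl])
    fix j assume "j \<in> {..<p s}"
    then have j: "j < p s" by simp
    have c2: "\<sigma>(s:=j) \<in> cfgs D p" "\<tau>(s:=j) \<in> cfgs D p" "\<sigma>'(s:=j) \<in> cfgs D p" "\<tau>'(s:=j) \<in> cfgs D p"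
      using cfgs_fun_upd s j c by blast+
    show "w (\<sigma>(s:=j)) (\<tau>(s:=j)) = w (\<sigma>'(s:=j)) (\<tau>'(s:=j))"
    proof (rule local_on_kernel_eq[OF w c2])
      show "\<forall>t. t \<notin> G \<longrightarrow> (\<sigma>(s:=j)) t = (\<tau>(s:=j)) t" using a1 by auto
      show "\<forall>t. t \<notin> G \<longrightarrow> (\<sigma>'(s:=j)) t = (\<tau>'(s:=j)) t" using a2 by auto
      show "\<forall>t\<in>G. (\<sigma>(s:=j)) t = (\<sigma>'(s:=j)) t \<and> (\<tau>(s:=j)) t = (\<tau>'(s:=j)) t" using a3 by auto
    qed
  qed
  then show "partial_trace s w \<sigma> \<tau> = partial_trace s w \<sigma>' \<tau>'" unfolding partial_trace_apply[OF w s]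
    using c e
    by simp
qed

lemma partial_trace_trivial:
  assumes w: "local_on D p G w"
    and s: "s \<in> sites D" "s \<notin> G"
  shows "partial_trace s w = w"
proof (intro ext)
  fix \<sigma> \<tau>
  show "partial_trace s w \<sigma> \<tau> = w \<sigma> \<tau>"
  proof (cases "\<sigma> \<in> cfgs D p \<and> \<tau> \<in> cfgs D p \<and> \<sigma> s = \<tau> s")
    case True
    have "(\<Sum>j<p s. w (\<sigma>(s:=j)) (\<tau>(s:=j))) = (\<Sum>j<p s. w \<sigma> \<tau>)"
      by (rule sum.cong[OF refl]) (rule local_on_kernel_fun_upd[OF w s(2) s(1)], use True in auto)
    moreover have "p s > 0" using ppos s by auto
    moreover have "partial_trace s w \<sigma> \<tau> = (1 / of_nat (p s)) * (\<Sum>j<p s. w (\<sigma>(s:=j)) (\<tau>(s:=j)))"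
      unfolding partial_trace_apply[OF w s(1)] by (rule if_P[OF True])
    ultimately show ?thesis by simp
  next
    case False
    then have "w \<sigma> \<tau> = 0" using local_on_nonzeroD[OF w, of \<sigma> \<tau>] s(2) by blast
    moreover have "partial_trace s w \<sigma> \<tau> = 0" unfolding partial_trace_apply[OF w s(1)]
      by (rule if_not_P[OF False])
    ultimately show ?thesis by simp
  qed
qed

lemma partial_trace_op_mult_right:
  assumes w: "local_on D p G w"
    and z: "local_on D p H z"
    and s: "s \<in> sites D" "s \<notin> H"
  shows "partial_trace s (op_mult w z) = op_mult (partial_trace s w) z"
proof -
  let ?c = "1 / (of_nat (p s) :: complex)"
  let ?K = "({s} \<union> G) \<union> {s}"
  let ?B = "\<lambda>ij. op_scale ?c (op_mult (op_mult (matrix_unit s (fst ij) (snd ij)) w) (matrix_unit s (snd ij) (fst ij)))"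
  have eqK: "?K = insert s G" by auto
  have lB: "local_on D p (insert s G) (?B ij)" for ij
    using local_on_op_scale[OF local_on_op_mult[OF local_on_op_mult[OF local_on_matrix_unit[OF s(1)] w] local_on_matrix_unit[OF s(1)]]]
    unfolding eqK .
  have "partial_trace s (op_mult w z) = op_sum (index_pairs (p s)) (\<lambda>ij. op_mult (?B ij) z)"
    unfolding partial_trace_def
  proof (rule op_sum_cong)
    fix ij assume "ij \<in> set (index_pairs (p s))"
    then have ij: "fst ij < p s" "snd ij < p s" unfolding set_index_pairs by auto
    let ?e = "matrix_unit s (fst ij) (snd ij)" and ?e' = "matrix_unit s (snd ij) (fst ij)"
    have le: "local_on D p {s} ?e" "local_on D p {s} ?e'" by (rule local_on_matrix_unit[OF s(1)])+
    have "op_mult (op_mult ?e (op_mult w z)) ?e' = op_mult (op_mult (op_mult ?e w) z) ?e'"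
      using op_mult_assoc[OF le(1) w z] by simp
    also have "\<dots> = op_mult (op_mult ?e w) (op_mult z ?e')"
      by (rule op_mult_assoc[OF local_on_op_mult[OF le(1) w] z le(2)])
    also have "\<dots> = op_mult (op_mult ?e w) (op_mult ?e' z)"
      using matrix_unit_commute[OF z s(2) s(1) ij(2) ij(1)] by simp
    also have "\<dots> = op_mult (op_mult (op_mult ?e w) ?e') z"
      by (rule op_mult_assoc[OF local_on_op_mult[OF le(1) w] le(2) z, symmetric])
    finally have "op_mult (op_mult ?e (op_mult w z)) ?e' = op_mult (op_mult (op_mult ?e w) ?e') z" .
    then show "op_scale ?c (op_mult (op_mult ?e (op_mult w z)) ?e') = op_mult (?B ij) z"
      using op_mult_op_scale_left[OF local_on_op_mult[OF local_on_op_mult[OF le(1) w] le(2)]]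
      by simp
  qed
  also have "\<dots> = op_mult (op_sum (index_pairs (p s)) ?B) z"
    by (rule op_mult_op_sum_left[of "insert s G" "index_pairs (p s)" ?B z, symmetric]) (use lB local_on_finite[OF lB] local_on_subset_sites[OF lB] in auto)
  finally show ?thesis unfolding partial_trace_def .
qed

lemma partial_trace_op_mult_left:
  assumes w: "local_on D p G w"
    and z: "local_on D p H z"
    and s: "s \<in> sites D" "s \<notin> H"
  shows "partial_trace s (op_mult z w) = op_mult z (partial_trace s w)"
proof -
  let ?c = "1 / (of_nat (p s) :: complex)"
  let ?B = "\<lambda>ij. op_scale ?c (op_mult (op_mult (matrix_unit s (fst ij) (snd ij)) w) (matrix_unit s (snd ij) (fst ij)))"
  have "partial_trace s (op_mult z w) = op_sum (index_pairs (p s)) (\<lambda>ij. op_mult z (?B ij))"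
    unfolding partial_trace_def
  proof (rule op_sum_cong)
    fix ij assume "ij \<in> set (index_pairs (p s))"
    then have ij: "fst ij < p s" "snd ij < p s" unfolding set_index_pairs by auto
    let ?e = "matrix_unit s (fst ij) (snd ij)" and ?e' = "matrix_unit s (snd ij) (fst ij)"
    have le: "local_on D p {s} ?e" "local_on D p {s} ?e'" by (rule local_on_matrix_unit[OF s(1)])+
    have "op_mult (op_mult ?e (op_mult z w)) ?e' = op_mult (op_mult (op_mult ?e z) w) ?e'"
      using op_mult_assoc[OF le(1) z w] by simp
    also have "\<dots> = op_mult (op_mult (op_mult z ?e) w) ?e'"
      using matrix_unit_commute[OF z s(2) s(1) ij] by simp
    also have "\<dots> = op_mult (op_mult z (op_mult ?e w)) ?e'"
      using op_mult_assoc[OF z le(1) w] by simp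
    also have "\<dots> = op_mult z (op_mult (op_mult ?e w) ?e')"
      by (rule op_mult_assoc[OF z local_on_op_mult[OF le(1) w] le(2)])
    finally have "op_mult (op_mult ?e (op_mult z w)) ?e' = op_mult z (op_mult (op_mult ?e w) ?e')" .
    then show "op_scale ?c (op_mult (op_mult ?e (op_mult z w)) ?e') = op_mult z (?B ij)"
      using op_mult_op_scale_right[OF z] by simp
  qed
  also have "\<dots> = op_mult z (op_sum (index_pairs (p s)) ?B)"
    by (rule op_mult_op_sum_right[OF z, symmetric])
  finally show ?thesis unfolding partial_trace_def .
qed

lemma partial_trace_op_sum:
  assumes fH: "finite H" "H \<subseteq> sites D"
    and f: "\<forall>i\<in>set xs. local_on D p H (f i)"
    and s: "s \<in> sites D"
  shows "partial_trace s (op_sum xs f) = op_sum xs (\<lambda>i. partial_trace s (f i))"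
proof -
  let ?c = "1 / (of_nat (p s) :: complex)"
  have "partial_trace s (op_sum xs f) = op_sum (index_pairs (p s)) (\<lambda>ij. op_sum xs (\<lambda>i. op_scale ?c
      (op_mult (op_mult (matrix_unit s (fst ij) (snd ij)) (f i)) (matrix_unit s (snd ij) (fst ij)))))"
    unfolding partial_trace_def
  proof (rule op_sum_cong)
    fix ij assume "ij \<in> set (index_pairs (p s))"
    let ?e = "matrix_unit s (fst ij) (snd ij)" and ?e' = "matrix_unit s (snd ij) (fst ij)"
    have le: "local_on D p {s} ?e" by (rule local_on_matrix_unit[OF s])
    have "op_mult ?e (op_sum xs f) = op_sum xs (\<lambda>i. op_mult ?e (f i))"
      by (rule op_mult_op_sum_right[OF le])
    moreover have "op_mult (op_sum xs (\<lambda>i. op_mult ?e (f i))) ?e' = op_sum xs (\<lambda>i. op_mult (op_mult ?e (f i)) ?e')"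
    proof (rule op_mult_op_sum_left)
      show "finite ({s} \<union> H)" "{s} \<union> H \<subseteq> sites D" using fH s by auto
      show "\<forall>i\<in>set xs. local_on D p ({s} \<union> H) (op_mult ?e (f i))" using f local_on_op_mult[OF le]
        by blast
    qed
    ultimately show "op_scale ?c (op_mult (op_mult ?e (op_sum xs f)) ?e') =
        op_sum xs (\<lambda>i. op_scale ?c (op_mult (op_mult ?e (f i)) ?e'))" by (simp add: op_scale_op_sum)
  qed
  also have "\<dots> = op_sum xs (\<lambda>i. op_sum (index_pairs (p s)) (\<lambda>ij. op_scale ?c
      (op_mult (op_mult (matrix_unit s (fst ij) (snd ij)) (f i)) (matrix_unit s (snd ij) (fst ij)))))"
    by (rule op_sum_swap)
  finally show ?thesis unfolding partial_trace_def .
qed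

lemma partial_trace_closed:
  assumes M: "op_zero \<in> M" "\<And>a b. a \<in> M \<Longrightarrow> b \<in> M \<Longrightarrow> op_add a b \<in> M"
    "\<And>a b. a \<in> M \<Longrightarrow> b \<in> M \<Longrightarrow> op_mult a b \<in> M" "\<And>a c. a \<in> M \<Longrightarrow> op_scale c a \<in> M"
  and U: "\<And>i j. i < p s \<Longrightarrow> j < p s \<Longrightarrow> matrix_unit s i j \<in> M" and w: "w \<in> M"
  shows "partial_trace s w \<in> M"
  unfolding partial_trace_def
proof (rule op_sum_closed[OF M(1,2)])
  show "\<forall>i\<in>set (index_pairs (p s)). op_scale (1 / of_nat (p s)) (op_mult (op_mult (matrix_unit s (fst i) (snd i)) w) (matrix_unit s (snd i) (fst i))) \<in> M"
    unfolding set_index_pairs using U w M(3,4) by auto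
qed

definition partial_traces :: "site list \<Rightarrow> op \<Rightarrow> op" where
  "partial_traces qs w = foldr partial_trace qs w"

lemma partial_traces_Nil: "partial_traces [] w = w"
  and partial_traces_Cons: "partial_traces (s # qs) w = partial_trace s (partial_traces qs w)"
  by (simp_all add: partial_traces_def)

lemma local_on_partial_traces_Diff:
  assumes "set qs \<subseteq> sites D"
  shows "local_on D p G w \<Longrightarrow> local_on D p (G - set qs) (partial_traces qs w)"
  using assms
proof (induction qs)
  case Nil then show ?case by (simp add: partial_traces_Nil)
next
  case (Cons s qs)
  have "local_on D p (G - set qs - {s}) (partial_trace s (partial_traces qs w))" using Cons
    by (intro local_on_partial_trace) auto
  moreover have "G - set qs - {s} = G - set (s # qs)" by auto
  ultimately show ?case by (simp add: partial_traces_Cons)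
qed

lemma local_on_partial_traces:
  assumes "set qs \<subseteq> sites D" "local_on D p G w"
  shows "local_on D p G (partial_traces qs w)"
  by (rule local_on_mono[OF local_on_partial_traces_Diff[OF assms]]) (use local_on_finite[OF assms(2)] local_on_subset_sites[OF assms(2)] in auto)

lemma Supp_partial_traces_subset:
  assumes "set qs \<subseteq> sites D" "local_on D p G w"
  shows "Supp D p (partial_traces qs w) \<subseteq> Supp D p w"
  by (rule Supp_subset[OF local_on_partial_traces[OF assms(1) local_on_Supp[OF assms(2)]]])

lemma partial_traces_trivial:
  assumes "set qs \<subseteq> sites D" "local_on D p G w" "set qs \<inter> G = {}"
  shows "partial_traces qs w = w"
  using assms
proof (induction qs)
  case Nil then show ?case by (simp add: partial_traces_Nil)
next
  case (Cons s qs)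
  then have "partial_traces qs w = w" by auto
  then show ?case using Cons.prems partial_trace_trivial[OF Cons.prems(2)]
    by (simp add: partial_traces_Cons)
qed

lemma partial_traces_op_mult_right:
  assumes "set qs \<subseteq> sites D" "local_on D p G w" "local_on D p H z" "set qs \<inter> H = {}"
  shows "partial_traces qs (op_mult w z) = op_mult (partial_traces qs w) z"
  using assms
proof (induction qs)
  case Nil then show ?case by (simp add: partial_traces_Nil)
next
  case (Cons s qs)
  then have "partial_traces qs (op_mult w z) = op_mult (partial_traces qs w) z" by auto
  moreover have "local_on D p G (partial_traces qs w)" using local_on_partial_traces Cons.prems
    by auto
  ultimately show ?case using Cons.prems partial_trace_op_mult_right[OF _ Cons.prems(3)]
    by (simp add: partial_traces_Cons)
qed

lemma partial_traces_op_mult_left: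
  assumes "set qs \<subseteq> sites D" "local_on D p G w" "local_on D p H z" "set qs \<inter> H = {}"
  shows "partial_traces qs (op_mult z w) = op_mult z (partial_traces qs w)"
  using assms
proof (induction qs)
  case Nil then show ?case by (simp add: partial_traces_Nil)
next
  case (Cons s qs)
  then have "partial_traces qs (op_mult z w) = op_mult z (partial_traces qs w)" by auto
  moreover have "local_on D p G (partial_traces qs w)" using local_on_partial_traces Cons.prems
    by auto
  ultimately show ?case using Cons.prems partial_trace_op_mult_left[OF _ Cons.prems(3)]
    by (simp add: partial_traces_Cons)
qed

lemma partial_traces_op_sum:
  assumes "set qs \<subseteq> sites D" "finite H" "H \<subseteq> sites D" "\<forall>i\<in>set xs. local_on D p H (f i)"
  shows "partial_traces qs (op_sum xs f) = op_sum xs (\<lambda>i. partial_traces qs (f i))"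
  using assms
proof (induction qs)
  case Nil then show ?case by (simp add: partial_traces_Nil)
next
  case (Cons s qs)
  then have h1: "partial_traces qs (op_sum xs f) = op_sum xs (\<lambda>i. partial_traces qs (f i))" by auto
  have h2: "\<forall>i\<in>set xs. local_on D p H (partial_traces qs (f i))"
    using local_on_partial_traces Cons.prems
    by auto
  have "partial_trace s (op_sum xs (\<lambda>i. partial_traces qs (f i))) = op_sum xs (\<lambda>i. partial_trace s (partial_traces qs (f i)))"
    by (rule partial_trace_op_sum[OF Cons.prems(2,3) h2]) (use Cons.prems in simp)
  then show ?case by (simp add: partial_traces_Cons h1)
qed

lemma partial_traces_closed:
  assumes M: "op_zero \<in> M" "\<And>a b. a \<in> M \<Longrightarrow> b \<in> M \<Longrightarrow> op_add a b \<in> M"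
    "\<And>a b. a \<in> M \<Longrightarrow> b \<in> M \<Longrightarrow> op_mult a b \<in> M" "\<And>a c. a \<in> M \<Longrightarrow> op_scale c a \<in> M"
  and U: "\<And>s i j. s \<in> set qs \<Longrightarrow> i < p s \<Longrightarrow> j < p s \<Longrightarrow> matrix_unit s i j \<in> M" and w: "w \<in> M"
  shows "partial_traces qs w \<in> M"
  using U
proof (induction qs)
  case Nil then show ?case using w by (simp add: partial_traces_Nil)
next
  case (Cons s qs)
  then have h: "partial_traces qs w \<in> M" by auto
  show ?case unfolding partial_traces_Cons
    by (rule partial_trace_closed[OF M _ h]) (use Cons.prems in auto)
qed

end

end


context
  fixes D :: nat and p :: "site \<Rightarrow> nat"
  assumes dims_pos: "\<forall>s\<in>sites D. 0 < p s"
begin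

lemma partial_traces_factorization:
  assumes qs: "set qL \<subseteq> sites D" "set qR \<subseteq> sites D"
    and x: "local_on D p F x" "set qL \<inter> F = {}" "set qR \<inter> F = {}"
    and x_eq: "x = op_sum ab (\<lambda>(a, b). op_mult a b)"
    and factors: "\<And>a b. (a, b) \<in> set ab \<Longrightarrow> local_on D p (S a) a \<and> local_on D p (S b) b \<and>
      set qR \<inter> S a = {} \<and> set qL \<inter> S b = {}"
  shows "x = op_sum ab (\<lambda>(a, b). op_mult (partial_traces D p qL a) (partial_traces D p qR b))"
proof -
  define U where "U = (\<Union>(a, b)\<in>set ab. S a \<union> S b)"
  have "finite (S a \<union> S b) \<and> S a \<union> S b \<subseteq> sites D" if "(a, b) \<in> set ab" for a b
    using factors[OF that] local_on_finite local_on_subset_sites by blast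
  then have U: "finite U" "U \<subseteq> sites D"
    unfolding U_def by (fastforce split: prod.split)+
  have on_U: "local_on D p U (op_mult a b)" "local_on D p U (op_mult a (partial_traces D p qR b))"
    if "(a, b) \<in> set ab" for a b
  proof -
    have "S a \<union> S b \<subseteq> U" using that by (auto simp: U_def)
    moreover have "local_on D p (S b) (partial_traces D p qR b)"
      using factors[OF that] by (intro local_on_partial_traces[OF dims_pos qs(2)]) blast
    ultimately show "local_on D p U (op_mult a b)" "local_on D p U (op_mult a (partial_traces D p qR b))"
      using factors[OF that] U by (auto intro: local_on_mono[OF local_on_op_mult])
  qed
  have "x = partial_traces D p qL (partial_traces D p qR x)"
    using partial_traces_trivial[OF dims_pos qs(1) x(1,2)] partial_traces_trivial[OF dims_pos qs(2) x(1,3)]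
    by simp
  also have "partial_traces D p qR x = op_sum ab (\<lambda>(a, b). partial_traces D p qR (op_mult a b))"
    unfolding x_eq case_prod_unfold using on_U(1)
    by (intro partial_traces_op_sum[OF dims_pos qs(2) U]) auto
  also have "\<dots> = op_sum ab (\<lambda>(a, b). op_mult a (partial_traces D p qR b))"
  proof (rule op_sum_case_prod_cong)
    fix a b assume "(a, b) \<in> set ab"
    with factors show "partial_traces D p qR (op_mult a b) = op_mult a (partial_traces D p qR b)"
      by (meson partial_traces_op_mult_left[OF dims_pos qs(2)])
  qed
  also have "partial_traces D p qL \<dots> =
    op_sum ab (\<lambda>(a, b). partial_traces D p qL (op_mult a (partial_traces D p qR b)))"
    unfolding case_prod_unfold using on_U(2)
    by (intro partial_traces_op_sum[OF dims_pos qs(1) U]) auto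
  also have "\<dots> = op_sum ab (\<lambda>(a, b). op_mult (partial_traces D p qL a) (partial_traces D p qR b))"
  proof (rule op_sum_case_prod_cong)
    fix a b assume "(a, b) \<in> set ab"
    with factors show "partial_traces D p qL (op_mult a (partial_traces D p qR b)) =
      op_mult (partial_traces D p qL a) (partial_traces D p qR b)"
      by (meson partial_traces_op_mult_right[OF dims_pos qs(1)] local_on_partial_traces[OF dims_pos qs(2)])
  qed
  finally show ?thesis .
qed

end

lemma foldr_max_le: "foldr max xs (0::int) \<le> c \<longleftrightarrow> 0 \<le> c \<and> (\<forall>x\<in>set xs. x \<le> c)"
  by (induction xs) auto

lemma site_dist_le_iff: "site_dist s t \<le> c \<longleftrightarrow> 0 \<le> c \<and> (\<forall>(a, b)\<in>set (zip s t). \<bar>a - b\<bar> \<le> c)"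
  unfolding site_dist_def foldr_max_le by auto

lemma site_dist_le_iff_nth:
  assumes "length s = length t"
  shows "site_dist s t \<le> c \<longleftrightarrow> 0 \<le> c \<and> (\<forall>k<length s. \<bar>s ! k - t ! k\<bar> \<le> c)"
  unfolding site_dist_le_iff set_zip using assms by auto

lemma site_dist_commute: "site_dist s t = site_dist t s"
proof -
  have "map (\<lambda>(a, b). \<bar>a - b\<bar>) (zip s t) = map (\<lambda>(a, b). \<bar>a - b\<bar>) (zip t s)"
  proof (induction s arbitrary: t)
    case (Cons a s)
    then show ?case by (cases t) (simp_all add: abs_minus_commute)
  qed simp
  then show ?thesis unfolding site_dist_def by simp
qed

lemma site_dist_triangle:
  assumes "length s = length t" "length t = length u" "site_dist s t \<le> a" "site_dist t u \<le> b"
  shows "site_dist s u \<le> a + b"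
proof -
  have a: "0 \<le> a" "\<forall>k<length s. \<bar>s ! k - t ! k\<bar> \<le> a"
    using assms(3) site_dist_le_iff_nth[OF assms(1)] by auto
  have b: "0 \<le> b" "\<forall>k<length s. \<bar>t ! k - u ! k\<bar> \<le> b"
    using assms(1,4) site_dist_le_iff_nth[OF assms(2)] by auto
  have "\<bar>s ! k - u ! k\<bar> \<le> a + b" if "k < length s" for k
    using a(2) b(2) that by fastforce
  then show ?thesis using site_dist_le_iff_nth[of s u] assms(1,2) a(1) b(1) by auto
qed

lemma abs_hd_diff_le_site_dist:
  assumes "s \<noteq> []" "t \<noteq> []" "site_dist s t \<le> c"
  shows "\<bar>hd s - hd t\<bar> \<le> c"
  using assms by (cases s; cases t) (auto simp: site_dist_le_iff)

lemma site_dist_tl_le: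
  assumes "site_dist s t \<le> c"
  shows "site_dist (tl s) (tl t) \<le> c"
proof -
  have "set (zip (tl s) (tl t)) \<subseteq> set (zip s t)"
    by (cases s; cases t) auto
  then show ?thesis using assms unfolding site_dist_le_iff by blast
qed

lemma nbhd_mono: "F \<subseteq> G \<Longrightarrow> nbhd D l F \<subseteq> nbhd D l G"
  unfolding nbhd_def by blast

lemma nbhd_subset_sites: "nbhd D l X \<subseteq> sites D"
  unfolding nbhd_def by blast

lemma tl_nbhd_nbhd_subset:
  assumes "F \<subseteq> sites D"
  shows "tl ` nbhd D m (nbhd D l F) \<subseteq> nbhd (D - 1) (l + m) (tl ` F)"
proof
  fix t' assume "t' \<in> tl ` nbhd D m (nbhd D l F)"
  then obtain t s f where t: "t' = tl t" "t \<in> sites D" "s \<in> sites D" "site_dist s t \<le> m"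
    and f: "f \<in> F" "site_dist f s \<le> l"
    unfolding nbhd_def by blast
  have "site_dist f t \<le> l + m"
    using f t assms by (intro site_dist_triangle) (auto simp: sites_def)
  then have "site_dist (tl f) t' \<le> l + m"
    unfolding t(1) by (rule site_dist_tl_le)
  moreover have "t' \<in> sites (D - 1)"
    using t unfolding sites_def by simp
  ultimately show "t' \<in> nbhd (D - 1) (l + m) (tl ` F)"
    unfolding nbhd_def using f(1) by blast
qed

definition right_half :: "nat \<Rightarrow> int \<Rightarrow> site set" where
  "right_half D n = {s \<in> sites D. n < hd s}"

context
  fixes D :: nat
  assumes D_pos: "1 \<le> D"
begin

lemma abs_hd_diff_le_if_nbhd:
  assumes "t \<in> nbhd D l X" "X \<subseteq> sites D"
  obtains s where "s \<in> X" "\<bar>hd s - hd t\<bar> \<le> l"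
proof -
  obtain s where "s \<in> X" "site_dist s t \<le> l" "t \<in> sites D"
    using assms(1) unfolding nbhd_def by blast
  moreover have "s \<noteq> []" "t \<noteq> []"
    using D_pos assms(2) calculation unfolding sites_def by auto
  ultimately show thesis
    using that abs_hd_diff_le_site_dist by blast
qed

lemma hd_le_if_nbhd_half_space: "t \<in> nbhd D l (half_space D n) \<Longrightarrow> hd t \<le> n + l"
  by (rule abs_hd_diff_le_if_nbhd[of t l "half_space D n"]) (auto simp: half_space_def)

lemma hd_ge_if_nbhd_right_half: "t \<in> nbhd D l (right_half D n) \<Longrightarrow> n + 1 - l \<le> hd t"
  by (rule abs_hd_diff_le_if_nbhd[of t l "right_half D n"]) (auto simp: right_half_def)

lemma nbhd_singleton_hd:
  assumes "t \<in> nbhd D l {s}" "s \<in> sites D"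
  shows "\<bar>hd s - hd t\<bar> \<le> l"
  using abs_hd_diff_le_if_nbhd[OF assms(1)] assms(2) by blast

end


section \<open>Quantum cellular automata\<close>

locale qca =
  fixes D :: nat and p :: "site \<Rightarrow> nat" and l :: int and \<alpha> :: "op \<Rightarrow> op"
  assumes D_pos: "1 \<le> D"
    and dims_pos: "\<forall>s\<in>sites D. 0 < p s"
    and is_qca: "is_QCA D p l \<alpha>"
begin

lemma bij: "bij_betw \<alpha> (Mat D p (sites D)) (Mat D p (sites D))"
  and hom_one: "\<alpha> (op_one D p) = op_one D p"
  using is_qca unfolding is_QCA_def by blast+

lemma hom_add:
    "x \<in> Mat D p (sites D) \<Longrightarrow> y \<in> Mat D p (sites D) \<Longrightarrow> \<alpha> (op_add x y) = op_add (\<alpha> x) (\<alpha> y)"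
  and hom_mult:
    "x \<in> Mat D p (sites D) \<Longrightarrow> y \<in> Mat D p (sites D) \<Longrightarrow> \<alpha> (op_mult x y) = op_mult (\<alpha> x) (\<alpha> y)"
  and hom_scale: "x \<in> Mat D p (sites D) \<Longrightarrow> \<alpha> (op_scale c x) = op_scale c (\<alpha> x)"
  and hom_adj: "x \<in> Mat D p (sites D) \<Longrightarrow> \<alpha> (op_adj x) = op_adj (\<alpha> x)"
  and spread: "x \<in> Mat D p (sites D) \<Longrightarrow> Supp D p (\<alpha> x) \<subseteq> nbhd D l (Supp D p x)"
  using is_qca unfolding is_QCA_def by blast+

lemma image_in_Mat_sites: "x \<in> Mat D p (sites D) \<Longrightarrow> \<alpha> x \<in> Mat D p (sites D)"
  using bij bij_betwE by blast

lemma hom_zero: "\<alpha> op_zero = op_zero"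
proof -
  have "\<alpha> op_zero = op_add (\<alpha> op_zero) (\<alpha> op_zero)"
    using hom_add[OF op_zero_in_Mat op_zero_in_Mat] by (simp add: op_add_def op_zero_def)
  then show ?thesis
    by (auto simp: op_add_def op_zero_def fun_eq_iff dest: fun_cong)
qed

lemma hom_op_sum:
  "\<forall>i\<in>set xs. f i \<in> Mat D p (sites D) \<Longrightarrow> \<alpha> (op_sum xs f) = op_sum xs (\<lambda>i. \<alpha> (f i))"
proof (induction xs)
  case (Cons i xs)
  have "op_sum xs f \<in> Mat D p (sites D)"
    using Cons.prems by (intro op_sum_closed op_zero_in_Mat Mat_op_add) auto
  with Cons show ?case by (simp add: op_sum_Cons hom_add)
qed (simp add: op_sum_Nil hom_zero)

lemma commute_if_images_commute:
  assumes "x \<in> Mat D p (sites D)" "y \<in> Mat D p (sites D)" "op_mult (\<alpha> x) (\<alpha> y) = op_mult (\<alpha> y) (\<alpha> x)"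
  shows "op_mult x y = op_mult y x"
  using assms hom_mult Mat_op_mult bij bij_betw_imp_inj_on inj_onD by metis

definition qca_inv :: "op \<Rightarrow> op" where
  "qca_inv = inv_into (Mat D p (sites D)) \<alpha>"

lemma qca_inv_in_Mat_sites: "x \<in> Mat D p (sites D) \<Longrightarrow> qca_inv x \<in> Mat D p (sites D)"
  unfolding qca_inv_def using bij bij_betw_inv_into bij_betwE by blast

lemma apply_qca_inv: "x \<in> Mat D p (sites D) \<Longrightarrow> \<alpha> (qca_inv x) = x"
  unfolding qca_inv_def using bij bij_betw_inv_into_right by metis

lemma local_on_image:
  assumes "local_on D p F x"
  shows "local_on D p (Supp D p (\<alpha> x)) (\<alpha> x)" "Supp D p (\<alpha> x) \<subseteq> nbhd D l F"
proof -
  have "x \<in> Mat D p (sites D)" using assms Mat_sites_iff by blast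
  then show "local_on D p (Supp D p (\<alpha> x)) (\<alpha> x)"
    using image_in_Mat_sites Mat_sites_iff local_on_Supp by blast
  show "Supp D p (\<alpha> x) \<subseteq> nbhd D l F"
    using spread \<open>x \<in> Mat D p (sites D)\<close> nbhd_mono[OF Supp_subset[OF assms]] by blast
qed

lemma image_Mat_Supp:
  assumes "a \<in> \<alpha> ` Mat D p X"
  shows "local_on D p (Supp D p a) a" "Supp D p a \<subseteq> nbhd D l X"
proof -
  obtain u where "u \<in> Mat D p X" "a = \<alpha> u" using assms by blast
  then obtain F where "a = \<alpha> u" "F \<subseteq> X" "local_on D p F u" unfolding Mat_iff by blast
  then show "local_on D p (Supp D p a) a" "Supp D p a \<subseteq> nbhd D l X"
    using local_on_image nbhd_mono by blast+
qed

lemma qca_inv_local_on: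
  assumes x: "local_on D p F x" and K: "nbhd D l F \<subseteq> K"
  obtains G where "G \<subseteq> K" "local_on D p G (qca_inv x)"
proof -
  have x_Mat: "x \<in> Mat D p (sites D)" using x Mat_sites_iff by blast
  then obtain G0 where G0: "local_on D p G0 (qca_inv x)"
    using qca_inv_in_Mat_sites Mat_sites_iff by blast
  have "local_on D p (G0 - (G0 - K)) (qca_inv x)"
  proof (rule local_on_Diff_if_commute[OF _ G0])
    show "finite (G0 - K)" "G0 - K \<subseteq> sites D"
      using local_on_finite[OF G0] local_on_subset_sites[OF G0] by auto
    fix t i j assume t: "t \<in> G0 - K" and ij: "i < p t" "j < p t"
    let ?e = "matrix_unit D p t i j"
    have t_sites: "t \<in> sites D" using t local_on_subset_sites[OF G0] by auto
    have e: "local_on D p {t} ?e" by (rule local_on_matrix_unit[OF t_sites])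
    have "Supp D p (\<alpha> ?e) \<inter> F = {}"
    proof -
      have "f \<notin> nbhd D l {t}" if "f \<in> F" for f
      proof
        assume "f \<in> nbhd D l {t}"
        then have "site_dist f t \<le> l" unfolding nbhd_def by (simp add: site_dist_commute)
        then have "t \<in> nbhd D l F" unfolding nbhd_def using t_sites that by blast
        with t K show False by blast
      qed
      then show ?thesis using local_on_image(2)[OF e] by blast
    qed
    then have "op_mult (\<alpha> ?e) x = op_mult x (\<alpha> ?e)"
      by (rule op_mult_commute_disjoint[OF local_on_image(1)[OF e] x])
    moreover have "?e \<in> Mat D p (sites D)" using e Mat_sites_iff by blast
    ultimately show "op_mult ?e (qca_inv x) = op_mult (qca_inv x) ?e"
      using commute_if_images_commute[OF _ qca_inv_in_Mat_sites[OF x_Mat]] apply_qca_inv[OF x_Mat]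
      by simp
  qed
  then show thesis using that[of "G0 - (G0 - K)"] by blast
qed

lemma matrix_unit_in_image:
  assumes "s \<in> sites D" "nbhd D l {s} \<subseteq> X"
  shows "matrix_unit D p s i j \<in> \<alpha> ` Mat D p X"
proof -
  have e: "local_on D p {s} (matrix_unit D p s i j)" by (rule local_on_matrix_unit[OF assms(1)])
  then obtain G where "G \<subseteq> X" "local_on D p G (qca_inv (matrix_unit D p s i j))"
    using qca_inv_local_on assms(2) by blast
  then have "qca_inv (matrix_unit D p s i j) \<in> Mat D p X" unfolding Mat_iff by blast
  moreover have "\<alpha> (qca_inv (matrix_unit D p s i j)) = matrix_unit D p s i j"
    using apply_qca_inv e Mat_sites_iff by blast
  ultimately show ?thesis by (metis image_eqI)
qed

lemma zero_in_image_Mat: "op_zero \<in> \<alpha> ` Mat D p X"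
  and one_in_image_Mat: "op_one D p \<in> \<alpha> ` Mat D p X"
  using image_eqI[where f = \<alpha>, OF hom_zero[symmetric] op_zero_in_Mat]
    image_eqI[where f = \<alpha>, OF hom_one[symmetric] op_one_in_Mat] .

lemma image_Mat_op_add:
  assumes "a \<in> \<alpha> ` Mat D p X" "b \<in> \<alpha> ` Mat D p X"
  shows "op_add a b \<in> \<alpha> ` Mat D p X"
proof -
  obtain u v where uv: "u \<in> Mat D p X" "v \<in> Mat D p X" "a = \<alpha> u" "b = \<alpha> v" using assms by blast
  moreover have "u \<in> Mat D p (sites D)" "v \<in> Mat D p (sites D)"
    using uv(1,2) Mat_subset_Mat_sites by blast+
  ultimately have "op_add a b = \<alpha> (op_add u v)" by (simp add: hom_add)
  then show ?thesis by (rule image_eqI[where f = \<alpha>]) (rule Mat_op_add[OF uv(1,2)])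
qed

lemma image_Mat_op_mult:
  assumes "a \<in> \<alpha> ` Mat D p X" "b \<in> \<alpha> ` Mat D p X"
  shows "op_mult a b \<in> \<alpha> ` Mat D p X"
proof -
  obtain u v where uv: "u \<in> Mat D p X" "v \<in> Mat D p X" "a = \<alpha> u" "b = \<alpha> v" using assms by blast
  moreover have "u \<in> Mat D p (sites D)" "v \<in> Mat D p (sites D)"
    using uv(1,2) Mat_subset_Mat_sites by blast+
  ultimately have "op_mult a b = \<alpha> (op_mult u v)" by (simp add: hom_mult)
  then show ?thesis by (rule image_eqI[where f = \<alpha>]) (rule Mat_op_mult[OF uv(1,2)])
qed

lemma image_Mat_op_scale:
  assumes "a \<in> \<alpha> ` Mat D p X"
  shows "op_scale c a \<in> \<alpha> ` Mat D p X"
proof -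
  obtain u where u: "u \<in> Mat D p X" "a = \<alpha> u" using assms by blast
  moreover have "u \<in> Mat D p (sites D)" using u(1) Mat_subset_Mat_sites by blast
  ultimately have "op_scale c a = \<alpha> (op_scale c u)" by (simp add: hom_scale)
  then show ?thesis by (rule image_eqI[where f = \<alpha>]) (rule Mat_op_scale[OF u(1)])
qed

lemma image_Mat_op_adj:
  assumes "a \<in> \<alpha> ` Mat D p X"
  shows "op_adj a \<in> \<alpha> ` Mat D p X"
proof -
  obtain u where u: "u \<in> Mat D p X" "a = \<alpha> u" using assms by blast
  moreover have "u \<in> Mat D p (sites D)" using u(1) Mat_subset_Mat_sites by blast
  ultimately have "op_adj a = \<alpha> (op_adj u)" by (simp add: hom_adj)
  then show ?thesis by (rule image_eqI[where f = \<alpha>]) (rule Mat_op_adj[OF u(1)])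
qed

lemma partial_traces_in_image_Mat:
  assumes "\<And>t. t \<in> set q \<Longrightarrow> t \<in> sites D \<and> nbhd D l {t} \<subseteq> X" "a \<in> \<alpha> ` Mat D p X"
  shows "partial_traces D p q a \<in> \<alpha> ` Mat D p X"
  using dims_pos assms
  by (intro partial_traces_closed zero_in_image_Mat image_Mat_op_add image_Mat_op_mult
      image_Mat_op_scale matrix_unit_in_image) auto

section \<open>The boundary algebra\<close>

lemma boundary_algebra_unital_star_subalg:
  "unital_star_subalg D p (Mat D p (strip D n l)) (boundary_algebra D p \<alpha> n l)"
  unfolding unital_star_subalg_def boundary_algebra_def
  by (auto intro: one_in_image_Mat op_one_in_Mat image_Mat_op_add image_Mat_op_mult
      image_Mat_op_scale image_Mat_op_adj Mat_op_add Mat_op_mult Mat_op_scale Mat_op_adj)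

lemma image_half_space_right_half_commute:
  assumes "a \<in> \<alpha> ` Mat D p (half_space D n)" "b \<in> \<alpha> ` Mat D p (right_half D n)"
  shows "op_mult a b = op_mult b a"
proof -
  obtain u v where uv: "u \<in> Mat D p (half_space D n)" "v \<in> Mat D p (right_half D n)" "a = \<alpha> u" "b = \<alpha> v"
    using assms by blast
  have "half_space D n \<inter> right_half D n = {}"
    unfolding half_space_def right_half_def by auto
  then have "op_mult u v = op_mult v u" using Mat_disjoint_commute uv(1,2) by blast
  then show ?thesis using uv Mat_subset_Mat_sites hom_mult by (metis subsetD)
qed

lemma qca_product_decomposition:
  assumes x: "local_on D p F x"
  obtains ab where "x = op_sum ab (\<lambda>(a, b). op_mult a b)"
    and "\<And>a b. (a, b) \<in> set ab \<Longrightarrow> a \<in> \<alpha> ` Mat D p (half_space D n) \<and> b \<in> \<alpha> ` Mat D p (right_half D n) \<and>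
      Supp D p a \<union> Supp D p b \<subseteq> nbhd D l (nbhd D l F)"
proof -
  have x_Mat: "x \<in> Mat D p (sites D)" using x Mat_sites_iff by blast
  obtain G where G: "G \<subseteq> nbhd D l F" "local_on D p G (qca_inv x)"
    using qca_inv_local_on[OF x order_refl] by blast
  let ?L = "G \<inter> half_space D n" and ?R = "G \<inter> right_half D n"
  have "G = ?L \<union> ?R" "?L \<inter> ?R = {}"
    using local_on_subset_sites[OF G(2)] by (auto simp: half_space_def right_half_def)
  moreover have "finite ?R" using local_on_finite[OF G(2)] by simp
  ultimately obtain uv where y: "qca_inv x = op_sum uv (\<lambda>(u, v). op_mult u v)"
    and uv: "\<forall>(u, v)\<in>set uv. local_on D p ?L u \<and> local_on D p ?R v"
    using local_on_Un_product_decomposition[where A = ?L and B = ?R] G(2) by metis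
  have uv_Mat: "u \<in> Mat D p (sites D)" "v \<in> Mat D p (sites D)" if "(u, v) \<in> set uv" for u v
    using uv that Mat_sites_iff by blast+
  have "x = \<alpha> (op_sum uv (\<lambda>(u, v). op_mult u v))"
    using apply_qca_inv[OF x_Mat] y by simp
  also have "\<dots> = op_sum uv (\<lambda>(u, v). op_mult (\<alpha> u) (\<alpha> v))"
    using uv_Mat by (subst hom_op_sum) (auto intro!: op_sum_cong Mat_op_mult simp: hom_mult)
  also have "\<dots> = op_sum (map (\<lambda>(u, v). (\<alpha> u, \<alpha> v)) uv) (\<lambda>(a, b). op_mult a b)"
    by (simp add: op_sum_map case_prod_unfold)
  finally have x_eq: "x = op_sum (map (\<lambda>(u, v). (\<alpha> u, \<alpha> v)) uv) (\<lambda>(a, b). op_mult a b)" .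
  show thesis
  proof (rule that[OF x_eq])
    fix a b assume "(a, b) \<in> set (map (\<lambda>(u, v). (\<alpha> u, \<alpha> v)) uv)"
    then obtain u v where "(u, v) \<in> set uv" "a = \<alpha> u" "b = \<alpha> v" by auto
    with uv have u: "local_on D p ?L u" and v: "local_on D p ?R v" by auto
    then have "u \<in> Mat D p (half_space D n)" "v \<in> Mat D p (right_half D n)"
      unfolding Mat_iff by blast+
    moreover have "nbhd D l ?L \<subseteq> nbhd D l (nbhd D l F)" "nbhd D l ?R \<subseteq> nbhd D l (nbhd D l F)"
      using G(1) by (intro nbhd_mono; blast)+
    then have "Supp D p a \<union> Supp D p b \<subseteq> nbhd D l (nbhd D l F)"
      using local_on_image(2)[OF u] local_on_image(2)[OF v] \<open>a = \<alpha> u\<close> \<open>b = \<alpha> v\<close> by blast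
    ultimately show "a \<in> \<alpha> ` Mat D p (half_space D n) \<and> b \<in> \<alpha> ` Mat D p (right_half D n) \<and>
      Supp D p a \<union> Supp D p b \<subseteq> nbhd D l (nbhd D l F)"
      using \<open>a = \<alpha> u\<close> \<open>b = \<alpha> v\<close> by blast
  qed
qed

lemma partial_traces_left_factor:
  assumes a: "a \<in> \<alpha> ` Mat D p (half_space D n)"
    and q: "set q \<subseteq> {t \<in> sites D. hd t \<le> n - l}" "{t \<in> Supp D p a. hd t \<le> n - l} \<subseteq> set q"
  shows "partial_traces D p q a \<in> boundary_algebra D p \<alpha> n l"
proof -
  have "partial_traces D p q a \<in> \<alpha> ` Mat D p (half_space D n)"
  proof (rule partial_traces_in_image_Mat[OF _ a])
    fix t assume "t \<in> set q"
    with q(1) have t: "t \<in> sites D" "hd t \<le> n - l" by auto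
    have "hd t' \<le> n" if "t' \<in> nbhd D l {t}" for t'
      using nbhd_singleton_hd[OF D_pos that t(1)] t(2) by linarith
    with t(1) show "t \<in> sites D \<and> nbhd D l {t} \<subseteq> half_space D n"
      using nbhd_subset_sites unfolding half_space_def by blast
  qed
  moreover have "Supp D p a - set q \<subseteq> strip D n l"
    using image_Mat_Supp(2)[OF a] q(2) nbhd_subset_sites hd_le_if_nbhd_half_space[OF D_pos]
    by (fastforce simp: strip_def)
  then have "partial_traces D p q a \<in> Mat D p (strip D n l)"
    using local_on_partial_traces_Diff[OF dims_pos _ image_Mat_Supp(1)[OF a]] q(1) Mat_iff by blast
  ultimately show ?thesis unfolding boundary_algebra_def by blast
qed

lemma partial_traces_right_factor:
  assumes b: "b \<in> \<alpha> ` Mat D p (right_half D n)"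
    and q: "set q \<subseteq> {t \<in> sites D. n + l + 1 \<le> hd t}" "{t \<in> Supp D p b. n + l + 1 \<le> hd t} \<subseteq> set q"
  shows "partial_traces D p q b \<in> Mat D p (strip D n l)"
    and "a \<in> boundary_algebra D p \<alpha> n l \<Longrightarrow>
      op_mult a (partial_traces D p q b) = op_mult (partial_traces D p q b) a"
proof -
  have "Supp D p b - set q \<subseteq> strip D n l"
    using image_Mat_Supp(2)[OF b] q(2) nbhd_subset_sites hd_ge_if_nbhd_right_half[OF D_pos]
    by (fastforce simp: strip_def)
  then show "partial_traces D p q b \<in> Mat D p (strip D n l)"
    using local_on_partial_traces_Diff[OF dims_pos _ image_Mat_Supp(1)[OF b]] q(1) Mat_iff by blast
  have "partial_traces D p q b \<in> \<alpha> ` Mat D p (right_half D n)"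
  proof (rule partial_traces_in_image_Mat[OF _ b])
    fix t assume "t \<in> set q"
    with q(1) have t: "t \<in> sites D" "n + l + 1 \<le> hd t" by auto
    have "n < hd t'" if "t' \<in> nbhd D l {t}" for t'
      using nbhd_singleton_hd[OF D_pos that t(1)] t(2) by linarith
    with t(1) show "t \<in> sites D \<and> nbhd D l {t} \<subseteq> right_half D n"
      using nbhd_subset_sites unfolding right_half_def by blast
  qed
  then show "a \<in> boundary_algebra D p \<alpha> n l \<Longrightarrow>
      op_mult a (partial_traces D p q b) = op_mult (partial_traces D p q b) a"
    using image_half_space_right_half_commute unfolding boundary_algebra_def by blast
qed

text \<open>The traced-out sites lie outside the strip, where \<open>x\<close> acts trivially, and each of them meets
  the support of only one factor of each product.\<close>
lemma far_partial_traces_factorization: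
  assumes F: "local_on D p F x" "F \<subseteq> strip D n l"
    and x_eq: "x = op_sum ab (\<lambda>(a, b). op_mult a b)"
    and ab: "\<And>a b. (a, b) \<in> set ab \<Longrightarrow> a \<in> \<alpha> ` Mat D p (half_space D n) \<and> b \<in> \<alpha> ` Mat D p (right_half D n)"
  obtains qL qR where "set qL \<subseteq> {t \<in> sites D. hd t \<le> n - l}" "set qR \<subseteq> {t \<in> sites D. n + l + 1 \<le> hd t}"
    and "\<And>a b. (a, b) \<in> set ab \<Longrightarrow>
      {t \<in> Supp D p a. hd t \<le> n - l} \<subseteq> set qL \<and> {t \<in> Supp D p b. n + l + 1 \<le> hd t} \<subseteq> set qR"
    and "x = op_sum ab (\<lambda>(a, b). op_mult (partial_traces D p qL a) (partial_traces D p qR b))"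
proof -
  have Supp_ab: "local_on D p (Supp D p a) a" "local_on D p (Supp D p b) b"
    "\<forall>t\<in>Supp D p a. hd t \<le> n + l" "\<forall>t\<in>Supp D p b. n + 1 - l \<le> hd t"
    if "(a, b) \<in> set ab" for a b
  proof -
    have a: "a \<in> \<alpha> ` Mat D p (half_space D n)" and b: "b \<in> \<alpha> ` Mat D p (right_half D n)"
      using ab[OF that] by blast+
    show "local_on D p (Supp D p a) a" "local_on D p (Supp D p b) b"
      using image_Mat_Supp(1)[OF a] image_Mat_Supp(1)[OF b] .
    show "\<forall>t\<in>Supp D p a. hd t \<le> n + l"
      using image_Mat_Supp(2)[OF a] hd_le_if_nbhd_half_space[OF D_pos] by blast
    show "\<forall>t\<in>Supp D p b. n + 1 - l \<le> hd t"
      using image_Mat_Supp(2)[OF b] hd_ge_if_nbhd_right_half[OF D_pos] by blast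
  qed
  define U where "U = (\<Union>(a, b)\<in>set ab. Supp D p a \<union> Supp D p b)"
  have "finite (Supp D p a \<union> Supp D p b) \<and> Supp D p a \<union> Supp D p b \<subseteq> sites D"
    if "(a, b) \<in> set ab" for a b
    using Supp_ab[OF that] local_on_finite local_on_subset_sites by blast
  then have U: "finite U" "U \<subseteq> sites D"
    unfolding U_def by (fastforce split: prod.split)+
  obtain qL where qL: "set qL = {t \<in> U. hd t \<le> n - l}"
    using finite_list[of "{t \<in> U. hd t \<le> n - l}"] U(1) by auto
  obtain qR where qR: "set qR = {t \<in> U. n + l + 1 \<le> hd t}"
    using finite_list[of "{t \<in> U. n + l + 1 \<le> hd t}"] U(1) by auto
  have qs: "set qL \<subseteq> sites D" "set qR \<subseteq> sites D" using qL qR U by auto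
  show thesis
  proof (rule that)
    show "set qL \<subseteq> {t \<in> sites D. hd t \<le> n - l}" "set qR \<subseteq> {t \<in> sites D. n + l + 1 \<le> hd t}"
      using qL qR U by auto
    show "{t \<in> Supp D p a. hd t \<le> n - l} \<subseteq> set qL \<and> {t \<in> Supp D p b. n + l + 1 \<le> hd t} \<subseteq> set qR"
      if "(a, b) \<in> set ab" for a b
      using that qL qR by (auto simp: U_def)
    show "x = op_sum ab (\<lambda>(a, b). op_mult (partial_traces D p qL a) (partial_traces D p qR b))"
    proof (rule partial_traces_factorization[OF dims_pos qs F(1) _ _ x_eq])
      show "set qL \<inter> F = {}" "set qR \<inter> F = {}" using F(2) qL qR by (auto simp: strip_def)
      fix a b assume "(a, b) \<in> set ab"
      then show "local_on D p (Supp D p a) a \<and> local_on D p (Supp D p b) b \<and>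
        set qR \<inter> Supp D p a = {} \<and> set qL \<inter> Supp D p b = {}"
        using Supp_ab qL qR by fastforce
    qed
  qed
qed

lemma strip_factorization:
  assumes x: "x \<in> Mat D p (strip D n l)"
  shows "\<exists>ab. x = op_sum_prods ab \<and> (\<forall>(a, b)\<in>set ab. a \<in> boundary_algebra D p \<alpha> n l \<and>
    b \<in> Mat D p (strip D n l) \<and> (\<forall>a'\<in>boundary_algebra D p \<alpha> n l. op_mult a' b = op_mult b a') \<and>
    tl ` Supp D p a \<subseteq> nbhd (D - 1) (2 * l) (tl ` Supp D p x) \<and>
    tl ` Supp D p b \<subseteq> nbhd (D - 1) (2 * l) (tl ` Supp D p x))"
proof -
  define F where "F = Supp D p x"
  obtain F0 where "F0 \<subseteq> strip D n l" "local_on D p F0 x" using x unfolding Mat_iff by blast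
  then have F: "local_on D p F x" "F \<subseteq> strip D n l"
    unfolding F_def using local_on_Supp Supp_subset by blast+
  have "F \<subseteq> sites D" using F(2) by (auto simp: strip_def)
  then have tl_F: "tl ` nbhd D l (nbhd D l F) \<subseteq> nbhd (D - 1) (2 * l) (tl ` F)"
    unfolding mult_2 by (rule tl_nbhd_nbhd_subset)
  obtain ab where x_eq: "x = op_sum ab (\<lambda>(a, b). op_mult a b)"
    and ab: "\<And>a b. (a, b) \<in> set ab \<Longrightarrow> a \<in> \<alpha> ` Mat D p (half_space D n) \<and>
      b \<in> \<alpha> ` Mat D p (right_half D n) \<and> Supp D p a \<union> Supp D p b \<subseteq> nbhd D l (nbhd D l F)"
    using qca_product_decomposition[OF F(1)] by blast
  obtain qL qR where qL: "set qL \<subseteq> {t \<in> sites D. hd t \<le> n - l}"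
    and qR: "set qR \<subseteq> {t \<in> sites D. n + l + 1 \<le> hd t}"
    and cover: "\<And>a b. (a, b) \<in> set ab \<Longrightarrow>
      {t \<in> Supp D p a. hd t \<le> n - l} \<subseteq> set qL \<and> {t \<in> Supp D p b. n + l + 1 \<le> hd t} \<subseteq> set qR"
    and "x = op_sum ab (\<lambda>(a, b). op_mult (partial_traces D p qL a) (partial_traces D p qR b))"
    using far_partial_traces_factorization[OF F x_eq] ab by blast
  then have "x = op_sum_prods (map (\<lambda>(a, b). (partial_traces D p qL a, partial_traces D p qR b)) ab)"
    by (simp add: op_sum_prods_eq_op_sum op_sum_map case_prod_unfold)
  moreover have "a' \<in> boundary_algebra D p \<alpha> n l \<and>
    b' \<in> Mat D p (strip D n l) \<and> (\<forall>a''\<in>boundary_algebra D p \<alpha> n l. op_mult a'' b' = op_mult b' a'') \<and>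
    tl ` Supp D p a' \<subseteq> nbhd (D - 1) (2 * l) (tl ` Supp D p x) \<and>
    tl ` Supp D p b' \<subseteq> nbhd (D - 1) (2 * l) (tl ` Supp D p x)"
    if "(a', b') \<in> set (map (\<lambda>(a, b). (partial_traces D p qL a, partial_traces D p qR b)) ab)" for a' b'
  proof -
    from that obtain a b where ab_mem: "(a, b) \<in> set ab"
      and a': "a' = partial_traces D p qL a" and b': "b' = partial_traces D p qR b"
      by auto
    have "Supp D p a' \<subseteq> Supp D p a" "Supp D p b' \<subseteq> Supp D p b"
      using Supp_partial_traces_subset[OF dims_pos] image_Mat_Supp(1) ab[OF ab_mem] qL qR
      unfolding a' b' by blast+
    then show ?thesis
      using partial_traces_left_factor[OF _ qL] partial_traces_right_factor[OF _ qR] cover[OF ab_mem]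
        ab[OF ab_mem] tl_F
      unfolding F_def a' b' by blast
  qed
  ultimately show ?thesis by blast
qed

end

theorem lemma3p6:
  fixes D :: nat and p :: "site \<Rightarrow> nat" and \<alpha> :: "op \<Rightarrow> op" and l n :: int
  assumes "D \<ge> 1"
    and "\<forall>s\<in>sites D. p s > 0"
    and "is_QCA D p l \<alpha>"
    and "l > 1"
  shows "invertible_strip_subalg D p n l (boundary_algebra D p \<alpha> n l) (2 * l)"
proof -
  interpret qca D p l \<alpha> using assms(1-3) by unfold_locales
  show ?thesis
    unfolding invertible_strip_subalg_def
    using boundary_algebra_unital_star_subalg strip_factorization by blast
qed

end
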